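(* Let $g,g^*$ be two flat Riemannian metrics on $\mathrm{SPD}_n$ with Levi-Civita connections $\nabla,\nabla^*$ and (path-independent) parallel transports $\Pi,\Pi^*$. Define the balanced bilinear form $g^0_\Sigma(X,Y)=\mathrm{tr}\big((\Pi_{\Sigma\to I_n}X)(\Pi^*_{\Sigma\to I_n}Y)\big)$ for $\Sigma\in\mathrm{SPD}_n$, $X,Y\in T_\Sigma\mathrm{SPD}_n$. If $g^0$ is a Riemannian metric (symmetric and positive definite at every point), then $(\mathrm{SPD}_n,g^0,\nabla,\nabla^* )$ is a dually flat manifold.
   Context: $\mathrm{SPD}_n$ is the manifold of $n\times n$ symmetric positive definite matrices; all tangent spaces are identified with the space $\mathrm{Sym}_n$ of symmetric matrices, in particular $T_{I_n}\mathrm{SPD}_n=\mathrm{Sym}_n$. For a flat metric on $\mathrm{SPD}_n$, parallel transport of its Levi-Civita connection between two points does not depend on the curve. Two connections $\nabla,\nabla^*$ are dual with respect to a metric $h$ if $X(h(Y,Z))=h(\nabla_XY,Z)+h(Y,\nabla^*_XZ)$ for all vector fields $X,Y,Z$. A quadruple $(\mathcal{M},h,\nabla,\nabla^* )$ is a dually flat manifold if $\nabla,\nabla^*$ are dual with respect to $h$ and $\nabla$ is flat (torsion-free with zero curvature); then $\nabla^*$ is flat too. *)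

theory Defs
  imports "HOL-Analysis.Analysis"
begin

text \<open>Matrices are real^'n^'n. Sym_n is a subset of this space, SPD_n an open
  subset of Sym_n; all tangent spaces are identified with Sym_n.\<close>

type_synonym 'n mat = "real^'n^'n"

definition Sym :: "'n::finite mat set" where
  "Sym = {A. transpose A = A}"

definition SPD :: "'n::finite mat set" where
  "SPD = {A. transpose A = A \<and> (\<forall>x. x \<noteq> 0 \<longrightarrow> x \<bullet> (A *v x) > 0)}"

definition dd :: "('n::finite mat \<Rightarrow> 'b::real_normed_vector) \<Rightarrow> 'n mat \<Rightarrow> 'n mat \<Rightarrow> 'b" where
  "dd f x v = vector_derivative (\<lambda>t. f (x + t *\<^sub>R v)) (at 0)"

fun iter_dd :: "'n::finite mat list \<Rightarrow> ('n mat \<Rightarrow> 'b::real_normed_vector) \<Rightarrow> ('n mat \<Rightarrow> 'b)" where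
  "iter_dd [] f = f"
| "iter_dd (v # vs) f = (\<lambda>x. dd (iter_dd vs f) x v)"

definition smooth_SPD :: "('n::finite mat \<Rightarrow> 'b::real_normed_vector) \<Rightarrow> bool" where
  "smooth_SPD f \<longleftrightarrow> (\<forall>vs. set vs \<subseteq> Sym \<longrightarrow>
      continuous_on SPD (iter_dd vs f) \<and>
      (\<forall>v\<in>Sym. \<forall>x\<in>SPD. (\<lambda>t. iter_dd vs f (x + t *\<^sub>R v)) differentiable (at 0)))"

definition vfield :: "('n::finite mat \<Rightarrow> 'n mat) \<Rightarrow> bool" where
  "vfield X \<longleftrightarrow> smooth_SPD X \<and> (\<forall>S\<in>SPD. X S \<in> Sym)"

definition lie :: "('n::finite mat \<Rightarrow> 'n mat) \<Rightarrow> ('n mat \<Rightarrow> 'n mat) \<Rightarrow> 'n mat \<Rightarrow> 'n mat" where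
  "lie X Y S = dd Y S (X S) - dd X S (Y S)"

definition bilinear_on_Sym :: "('n::finite mat \<Rightarrow> 'n mat \<Rightarrow> 'b::real_vector) \<Rightarrow> bool" where
  "bilinear_on_Sym B \<longleftrightarrow>
     (\<forall>A A' C. \<forall>a::real. A \<in> Sym \<and> A' \<in> Sym \<and> C \<in> Sym \<longrightarrow>
        B (a *\<^sub>R A + A') C = a *\<^sub>R B A C + B A' C \<and>
        B C (a *\<^sub>R A + A') = a *\<^sub>R B C A + B C A')"

definition riemannian_metric :: "('n::finite mat \<Rightarrow> 'n mat \<Rightarrow> 'n mat \<Rightarrow> real) \<Rightarrow> bool" where
  "riemannian_metric g \<longleftrightarrow>
     (\<forall>S\<in>SPD. bilinear_on_Sym (g S)
        \<and> (\<forall>X\<in>Sym. \<forall>Y\<in>Sym. g S X Y = g S Y X)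
        \<and> (\<forall>X\<in>Sym. X \<noteq> 0 \<longrightarrow> g S X X > 0))
     \<and> (\<forall>X\<in>Sym. \<forall>Y\<in>Sym. smooth_SPD (\<lambda>S. g S X Y))"

text \<open>An affine connection on SPD_n is given (in the global chart) by its Christoffel map
  Gamma: nabla_X Y = DY[X] + Gamma(X,Y), with Gamma smooth and bilinear, Sym-valued.\<close>
definition connection :: "('n::finite mat \<Rightarrow> 'n mat \<Rightarrow> 'n mat \<Rightarrow> 'n mat) \<Rightarrow> bool" where
  "connection \<Gamma> \<longleftrightarrow>
     (\<forall>S\<in>SPD. bilinear_on_Sym (\<Gamma> S) \<and> (\<forall>X\<in>Sym. \<forall>Y\<in>Sym. \<Gamma> S X Y \<in> Sym))
     \<and> (\<forall>X\<in>Sym. \<forall>Y\<in>Sym. smooth_SPD (\<lambda>S. \<Gamma> S X Y))"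

definition cov :: "('n::finite mat \<Rightarrow> 'n mat \<Rightarrow> 'n mat \<Rightarrow> 'n mat) \<Rightarrow>
    ('n mat \<Rightarrow> 'n mat) \<Rightarrow> ('n mat \<Rightarrow> 'n mat) \<Rightarrow> 'n mat \<Rightarrow> 'n mat" where
  "cov \<Gamma> X Y S = dd Y S (X S) + \<Gamma> S (X S) (Y S)"

definition torsion_free :: "('n::finite mat \<Rightarrow> 'n mat \<Rightarrow> 'n mat \<Rightarrow> 'n mat) \<Rightarrow> bool" where
  "torsion_free \<Gamma> \<longleftrightarrow> (\<forall>X Y. vfield X \<and> vfield Y \<longrightarrow>
     (\<forall>S\<in>SPD. cov \<Gamma> X Y S - cov \<Gamma> Y X S - lie X Y S = 0))"

definition curvature_free :: "('n::finite mat \<Rightarrow> 'n mat \<Rightarrow> 'n mat \<Rightarrow> 'n mat) \<Rightarrow> bool" where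
  "curvature_free \<Gamma> \<longleftrightarrow> (\<forall>X Y Z. vfield X \<and> vfield Y \<and> vfield Z \<longrightarrow>
     (\<forall>S\<in>SPD. cov \<Gamma> X (cov \<Gamma> Y Z) S - cov \<Gamma> Y (cov \<Gamma> X Z) S - cov \<Gamma> (lie X Y) Z S = 0))"

definition flat :: "('n::finite mat \<Rightarrow> 'n mat \<Rightarrow> 'n mat \<Rightarrow> 'n mat) \<Rightarrow> bool" where
  "flat \<Gamma> \<longleftrightarrow> connection \<Gamma> \<and> torsion_free \<Gamma> \<and> curvature_free \<Gamma>"

definition dual :: "('n::finite mat \<Rightarrow> 'n mat \<Rightarrow> 'n mat \<Rightarrow> real) \<Rightarrow>
    ('n mat \<Rightarrow> 'n mat \<Rightarrow> 'n mat \<Rightarrow> 'n mat) \<Rightarrow> ('n mat \<Rightarrow> 'n mat \<Rightarrow> 'n mat \<Rightarrow> 'n mat) \<Rightarrow> bool" where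
  "dual h \<Gamma> \<Gamma>' \<longleftrightarrow> (\<forall>X Y Z. vfield X \<and> vfield Y \<and> vfield Z \<longrightarrow>
     (\<forall>S\<in>SPD. dd (\<lambda>T. h T (Y T) (Z T)) S (X S)
        = h S (cov \<Gamma> X Y S) (Z S) + h S (Y S) (cov \<Gamma>' X Z S)))"

definition levi_civita :: "('n::finite mat \<Rightarrow> 'n mat \<Rightarrow> 'n mat \<Rightarrow> real) \<Rightarrow>
    ('n mat \<Rightarrow> 'n mat \<Rightarrow> 'n mat \<Rightarrow> 'n mat) \<Rightarrow> bool" where
  "levi_civita g \<Gamma> \<longleftrightarrow> connection \<Gamma> \<and> torsion_free \<Gamma> \<and> dual g \<Gamma> \<Gamma>"

definition flat_metric :: "('n::finite mat \<Rightarrow> 'n mat \<Rightarrow> 'n mat \<Rightarrow> real) \<Rightarrow> bool" where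
  "flat_metric g \<longleftrightarrow> riemannian_metric g \<and> (\<forall>\<Gamma>. levi_civita g \<Gamma> \<longrightarrow> flat \<Gamma>)"

text \<open>Parallel transport of X from S to I_n for the connection Gamma, along the segment
  c(t) = S + t (I - S); for a flat connection the result is independent of the curve.\<close>
definition ptrans_to_id :: "('n::finite mat \<Rightarrow> 'n mat \<Rightarrow> 'n mat \<Rightarrow> 'n mat) \<Rightarrow> 'n mat \<Rightarrow> 'n mat \<Rightarrow> 'n mat" where
  "ptrans_to_id \<Gamma> S X = (THE W. \<exists>V. V 0 = X \<and> V 1 = W \<and>
      (\<forall>t\<in>{0..1}. V t \<in> Sym \<and>
         (V has_vector_derivative (- \<Gamma> (S + t *\<^sub>R (mat 1 - S)) (mat 1 - S) (V t))) (at t within {0..1})))"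

definition balanced :: "('n::finite mat \<Rightarrow> 'n mat \<Rightarrow> 'n mat \<Rightarrow> 'n mat) \<Rightarrow>
    ('n mat \<Rightarrow> 'n mat \<Rightarrow> 'n mat \<Rightarrow> 'n mat) \<Rightarrow> 'n mat \<Rightarrow> 'n mat \<Rightarrow> 'n mat \<Rightarrow> real" where
  "balanced \<Gamma> \<Gamma>' S X Y = trace (ptrans_to_id \<Gamma> S X ** ptrans_to_id \<Gamma>' S Y)"

definition dually_flat :: "('n::finite mat \<Rightarrow> 'n mat \<Rightarrow> 'n mat \<Rightarrow> real) \<Rightarrow>
    ('n mat \<Rightarrow> 'n mat \<Rightarrow> 'n mat \<Rightarrow> 'n mat) \<Rightarrow> ('n mat \<Rightarrow> 'n mat \<Rightarrow> 'n mat \<Rightarrow> 'n mat) \<Rightarrow> bool" where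
  "dually_flat h \<Gamma> \<Gamma>' \<longleftrightarrow> dual h \<Gamma> \<Gamma>' \<and> flat \<Gamma>"

end

theory Submission
  imports Defs
begin

text \<open>
  Duality of \<open>(g\<^sup>0, \<nabla>, \<nabla>\<^sup>*)\<close> is a pointwise identity, and flatness of \<open>\<nabla>\<close> is a hypothesis, so
  everything rests on one fact about a flat connection: if \<open>\<Pi>\<^sub>P\<close> denotes parallel transport
  from \<open>P\<close> to \<open>I\<close>, then \<open>d/ds \<Pi>\<^bsub>S + s v\<^esub> (w s)\<close> at \<open>s = 0\<close> equals \<open>\<Pi>\<^sub>S (w' + \<Gamma>\<^sub>S(v, w 0))\<close>, the
  transport of the covariant derivative. Given this for \<open>\<nabla>\<close> and \<open>\<nabla>\<^sup>*\<close>, the product rule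
  for \<open>tr (\<Pi> Y \<cdot> \<Pi>\<^sup>* Z)\<close> is exactly the duality equation.

  To prove the fact, transport along the segment from \<open>S + s v\<close> to \<open>I\<close> solves a linear ODE
  whose coefficients depend differentiably on \<open>s\<close>, so its derivative in \<open>s\<close> solves the
  linearised, inhomogeneous equation with initial value \<open>w'\<close>. Zero curvature is precisely what
  makes \<open>J t - (1 - t) \<Gamma>(v, U t)\<close> a solution of it, where \<open>U\<close> transports \<open>w 0\<close> and \<open>J\<close>
  transports \<open>w' + \<Gamma>\<^sub>S(v, w 0)\<close> from \<open>S\<close>; at \<open>t = 1\<close> it equals \<open>J 1\<close>.
\<close>

section \<open>Linear ODEs on the unit interval\<close>

lemma weighted_energy_le:
  fixes E E' :: "real \<Rightarrow> 'a::real_inner"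
  assumes der: "\<And>t. t \<in> {0..1} \<Longrightarrow> (E has_vector_derivative E' t) (at t within {0..1})"
    and growth: "\<And>t. t \<in> {0..1} \<Longrightarrow> norm (E' t) \<le> M * norm (E t) + r"
    and M: "M \<ge> 0" and t: "t \<in> {0..1}"
  shows "exp (- ((2 * M + 1) * t)) * ((norm (E t))\<^sup>2 + r\<^sup>2) \<le> (norm (E 0))\<^sup>2 + r\<^sup>2"
proof -
  define K where "K = 2 * M + 1"
  have K1: "K \<ge> 1" using M by (simp add: K_def)
  \<comment> \<open>\<open>h\<close> is non-increasing because \<open>2 \<bar>E \<bullet> E'\<bar> \<le> K \<parallel>E\<parallel>\<^sup>2 + r\<^sup>2\<close>.\<close>
  define h where "h x = exp (- (K * x)) * (E x \<bullet> E x + r\<^sup>2)" for x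
  define h' where "h' x = exp (- (K * x)) * (2 * (E x \<bullet> E' x) - K * (E x \<bullet> E x + r\<^sup>2))" for x
  have h_deriv: "(h has_real_derivative h' x) (at x within {0..t})" if "x \<in> {0..t}" for x
  proof -
    have "(E has_vector_derivative E' x) (at x within {0..t})"
      using der[of x] that t by (auto intro: has_vector_derivative_within_subset)
    from bounded_bilinear.has_vector_derivative[OF bounded_bilinear_inner this this]
    have "((\<lambda>x. E x \<bullet> E x) has_real_derivative 2 * (E x \<bullet> E' x)) (at x within {0..t})"
      by (simp add: has_real_derivative_iff_has_vector_derivative inner_commute)
    then show ?thesis
      unfolding h_def h'_def by (auto intro!: derivative_eq_intros simp: algebra_simps)
  qed
  have h'_nonpos: "h' x \<le> 0" if "x \<in> {0..t}" for x
  proof -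
    have "2 * (E x \<bullet> E' x) \<le> 2 * (norm (E x) * (M * norm (E x) + r))"
      using Cauchy_Schwarz_ineq2[of "E x" "E' x"] growth[of x] that t
      by (smt (verit, best) atLeastAtMost_iff mult_left_mono norm_ge_zero)
    also have "\<dots> \<le> K * (E x \<bullet> E x) + r\<^sup>2"
      using sum_squares_bound[of r "norm (E x)"] M
      by (simp add: K_def power2_norm_eq_inner[symmetric] power2_eq_square algebra_simps)
    finally have "2 * (E x \<bullet> E' x) - K * (E x \<bullet> E x + r\<^sup>2) \<le> 0"
      using mult_right_mono[OF K1, of "r\<^sup>2"] by (simp add: algebra_simps)
    then show ?thesis
      unfolding h'_def by (simp add: mult_nonneg_nonpos)
  qed
  obtain \<xi> where "\<xi> \<in> {0..t}" "h t - h 0 = h' \<xi> * t"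
    using mvt_very_simple[of 0 t h "\<lambda>x. (*) (h' x)"] h_deriv t
    by (auto simp: has_field_derivative_def mult.commute)
  then have "h t \<le> h 0"
    using h'_nonpos[of \<xi>] t mult_nonpos_nonneg[of "h' \<xi>" t] by auto
  then show ?thesis
    by (simp add: h_def K_def power2_norm_eq_inner)
qed

lemma gronwall_unit_interval:
  fixes E E' :: "real \<Rightarrow> 'a::real_inner"
  assumes der: "\<And>t. t \<in> {0..1} \<Longrightarrow> (E has_vector_derivative E' t) (at t within {0..1})"
    and growth: "\<And>t. t \<in> {0..1} \<Longrightarrow> norm (E' t) \<le> M * norm (E t) + r"
    and M: "M \<ge> 0" and r: "r \<ge> 0" and t: "t \<in> {0..1}"
  shows "norm (E t) \<le> (norm (E 0) + r) * exp (M + 1)"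
proof -
  let ?c = "(2 * M + 1) * t"
  from mult_left_mono[OF weighted_energy_le[OF der growth M t], of "exp ?c"]
  have "(exp ?c * exp (- ?c)) * ((norm (E t))\<^sup>2 + r\<^sup>2) \<le> exp ?c * ((norm (E 0))\<^sup>2 + r\<^sup>2)"
    by (simp add: mult.assoc)
  then have "(norm (E t))\<^sup>2 + r\<^sup>2 \<le> exp ?c * ((norm (E 0))\<^sup>2 + r\<^sup>2)"
    by (simp only: exp_minus_inverse mult_1)
  also have "\<dots> \<le> exp (2 * (M + 1)) * (norm (E 0) + r)\<^sup>2"
  proof (rule mult_mono)
    have "?c \<le> 2 * M + 1"
      using t M mult_left_mono[of t 1 "2 * M + 1"] by simp
    then show "exp ?c \<le> exp (2 * (M + 1))"
      by simp
    show "(norm (E 0))\<^sup>2 + r\<^sup>2 \<le> (norm (E 0) + r)\<^sup>2"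
      using r by (simp add: power2_eq_square algebra_simps)
  qed simp_all
  also have "\<dots> = ((norm (E 0) + r) * exp (M + 1))\<^sup>2"
    by (simp add: power2_eq_square exp_add[symmetric] algebra_simps)
  finally have "(norm (E t))\<^sup>2 \<le> ((norm (E 0) + r) * exp (M + 1))\<^sup>2"
    by (smt (verit) zero_le_power2)
  then show ?thesis
    by (rule power2_le_imp_le) (use r in simp)
qed

lemma linear_Basis_expansion:
  fixes f :: "'a::euclidean_space \<Rightarrow> 'b::real_vector"
  assumes "linear f"
  shows "f x = (\<Sum>i\<in>Basis. (x \<bullet> i) *\<^sub>R f i)"
proof -
  have "f x = f (\<Sum>i\<in>Basis. (x \<bullet> i) *\<^sub>R i)"
    by (simp add: euclidean_representation)
  also have "\<dots> = (\<Sum>i\<in>Basis. (x \<bullet> i) *\<^sub>R f i)"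
    by (simp add: linear_sum[OF assms] linear_scale[OF assms] o_def)
  finally show ?thesis .
qed

lemma norm_linear_le_Basis:
  fixes f :: "'a::euclidean_space \<Rightarrow> 'b::real_normed_vector"
  assumes "linear f"
  shows "norm (f x) \<le> (\<Sum>i\<in>Basis. norm (f i)) * norm x"
proof -
  have "norm (f x) \<le> (\<Sum>i\<in>Basis. norm ((x \<bullet> i) *\<^sub>R f i))"
    by (subst linear_Basis_expansion[OF assms]) (rule norm_sum)
  also have "\<dots> \<le> (\<Sum>i\<in>Basis. norm (f i) * norm x)"
  proof (rule sum_mono)
    fix i :: 'a assume "i \<in> Basis"
    from mult_right_mono[OF Basis_le_norm[OF this, of x] norm_ge_zero[of "f i"]]
    show "norm ((x \<bullet> i) *\<^sub>R f i) \<le> norm (f i) * norm x"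
      by (simp add: mult.commute)
  qed
  finally show ?thesis
    by (simp add: sum_distrib_right)
qed

lemma norm_bilinear_le_Basis:
  fixes B :: "'a::euclidean_space \<Rightarrow> 'b::euclidean_space \<Rightarrow> 'c::real_normed_vector"
  assumes "bilinear B"
  shows "norm (B x y) \<le> (\<Sum>i\<in>Basis. \<Sum>j\<in>Basis. norm (B i j)) * norm x * norm y"
proof -
  have "norm (B x y) \<le> (\<Sum>i\<in>Basis. norm (B i y)) * norm x"
    using assms by (intro norm_linear_le_Basis) (simp add: bilinear_def)
  also have "\<dots> \<le> ((\<Sum>i\<in>Basis. \<Sum>j\<in>Basis. norm (B i j)) * norm y) * norm x"
  proof (rule mult_right_mono)
    have "(\<Sum>i\<in>Basis. norm (B i y)) \<le> (\<Sum>i\<in>Basis. (\<Sum>j\<in>Basis. norm (B i j)) * norm y)"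
      using assms by (intro sum_mono norm_linear_le_Basis) (simp add: bilinear_def)
    then show "(\<Sum>i\<in>Basis. norm (B i y)) \<le> (\<Sum>i\<in>Basis. \<Sum>j\<in>Basis. norm (B i j)) * norm y"
      by (simp add: sum_distrib_right)
  qed simp
  finally show ?thesis
    by (simp add: ac_simps)
qed

lemma continuous_on_linear_family_apply:
  fixes a :: "real \<Rightarrow> 'a::euclidean_space \<Rightarrow> 'b::real_normed_vector"
  assumes "\<And>t. t \<in> S \<Longrightarrow> linear (a t)" and "\<And>x. continuous_on S (\<lambda>t. a t x)"
    and "continuous_on S V"
  shows "continuous_on S (\<lambda>t. a t (V t))"
proof -
  have "continuous_on S (\<lambda>t. \<Sum>i\<in>Basis. (V t \<bullet> i) *\<^sub>R a t i)"
    by (intro continuous_intros assms)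
  then show ?thesis
    by (rule continuous_on_cong[THEN iffD1, rotated 2]) (auto simp: linear_Basis_expansion[OF assms(1)])
qed

lemma linear_family_uniform_bound:
  fixes a :: "real \<Rightarrow> 'a::euclidean_space \<Rightarrow> 'b::real_normed_vector"
  assumes lin: "\<And>t. t \<in> S \<Longrightarrow> linear (a t)" and "\<And>x. continuous_on S (\<lambda>t. a t x)"
    and "compact S"
  obtains M where "M \<ge> 0" and "\<And>t x. t \<in> S \<Longrightarrow> norm (a t x) \<le> M * norm x"
proof -
  have "\<exists>B. \<forall>t\<in>S. norm (a t i) \<le> B" for i
  proof -
    have "bounded ((\<lambda>t. a t i) ` S)"
      by (intro compact_imp_bounded compact_continuous_image assms)
    then show ?thesis
      by (auto simp: bounded_iff)
  qed
  then obtain B where B: "\<And>i t. t \<in> S \<Longrightarrow> norm (a t i) \<le> B i"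
    by metis
  define M where "M = (\<Sum>i\<in>Basis. \<bar>B i\<bar>)"
  show thesis
  proof (rule that)
    show "M \<ge> 0"
      by (simp add: M_def sum_nonneg)
    fix t x assume "t \<in> S"
    then have "(\<Sum>i\<in>Basis. norm (a t i)) \<le> M"
      unfolding M_def by (intro sum_mono) (auto intro: order_trans[OF B])
    then show "norm (a t x) \<le> M * norm x"
      using norm_linear_le_Basis[OF lin[OF \<open>t \<in> S\<close>], of x] by (meson mult_right_mono norm_ge_zero order_trans)
  qed
qed

lemma integral_power_div_fact:
  fixes c t :: real
  assumes "0 \<le> t"
  shows "integral {0..t} (\<lambda>r. c * r ^ k / fact k) = c * t ^ Suc k / fact (Suc k)"
proof -
  have "((\<lambda>r. c * r ^ k / fact k) has_integral
      (c * t ^ Suc k / fact (Suc k) - c * 0 ^ Suc k / fact (Suc k))) {0..t}"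
  proof (rule fundamental_theorem_of_calculus[OF assms])
    fix x :: real
    have "((\<lambda>r. c * r ^ Suc k / fact (Suc k)) has_real_derivative
        c * (real (Suc k) * x ^ k) / fact (Suc k)) (at x within {0..t})"
      by (intro DERIV_cdivide DERIV_cmult) (use DERIV_pow[of "Suc k" x] in simp)
    moreover have "c * (real (Suc k) * x ^ k) / fact (Suc k) = c * x ^ k / fact k"
      by (simp del: of_nat_Suc add: field_simps)
    ultimately show "((\<lambda>r. c * r ^ Suc k / fact (Suc k)) has_vector_derivative c * x ^ k / fact k)
        (at x within {0..t})"
      by (simp only: has_real_derivative_iff_has_vector_derivative)
  qed
  from integral_unique[OF this] show ?thesis
    by simp
qed

lemma uniform_limit_linear_family_apply:
  fixes a :: "real \<Rightarrow> 'a::real_normed_vector \<Rightarrow> 'b::real_normed_vector"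
  assumes lim: "uniform_limit S f V F" and lin: "\<And>t. t \<in> S \<Longrightarrow> linear (a t)"
    and M: "M \<ge> 0" "\<And>t x. t \<in> S \<Longrightarrow> norm (a t x) \<le> M * norm x"
  shows "uniform_limit S (\<lambda>n t. a t (f n t)) (\<lambda>t. a t (V t)) F"
proof (rule uniform_limitI)
  fix e :: real assume "e > 0"
  then have "\<forall>\<^sub>F n in F. \<forall>t\<in>S. dist (f n t) (V t) < e / (M + 1)"
    using lim M(1) by (auto simp: uniform_limit_iff)
  then show "\<forall>\<^sub>F n in F. \<forall>t\<in>S. dist (a t (f n t)) (a t (V t)) < e"
  proof eventually_elim
    case (elim n)
    show ?case
    proof
      fix t assume t: "t \<in> S"
      have "dist (a t (f n t)) (a t (V t)) \<le> M * dist (f n t) (V t)"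
        using M(2)[OF t, of "f n t - V t"] by (simp add: dist_norm linear_diff[OF lin[OF t]])
      also have "\<dots> \<le> (M + 1) * dist (f n t) (V t)"
        by (intro mult_right_mono) auto
      also have "\<dots> < e"
        using elim t M(1) by (simp add: field_simps)
      finally show "dist (a t (f n t)) (a t (V t)) < e" .
    qed
  qed
qed

primrec picard_iterate :: "(real \<Rightarrow> 'a \<Rightarrow> 'a) \<Rightarrow> 'a \<Rightarrow> nat \<Rightarrow> real \<Rightarrow> 'a::euclidean_space" where
  "picard_iterate a V0 0 = (\<lambda>t. V0)"
| "picard_iterate a V0 (Suc k) = (\<lambda>t. V0 + integral {0..t} (\<lambda>r. a r (picard_iterate a V0 k r)))"

context
  fixes a :: "real \<Rightarrow> 'a::euclidean_space \<Rightarrow> 'a" and V0 :: 'a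
  assumes lin: "\<And>t. t \<in> {0..1} \<Longrightarrow> linear (a t)"
    and cont: "\<And>x. continuous_on {0..1} (\<lambda>t. a t x)"
begin

lemma continuous_on_picard_iterate: "continuous_on {0..1} (picard_iterate a V0 k)"
proof (induction k)
  case (Suc k)
  have "continuous_on {0..1} (\<lambda>r. a r (picard_iterate a V0 k r))"
    by (rule continuous_on_linear_family_apply[OF lin cont Suc])
  from integral_has_vector_derivative[OF this]
  have "continuous_on {0..1} (\<lambda>t. integral {0..t} (\<lambda>r. a r (picard_iterate a V0 k r)))"
    by (rule continuous_on_vector_derivative)
  then show ?case
    by (auto intro!: continuous_intros)
qed (simp add: continuous_on_const)

lemma integrable_picard_iterate:
  "t \<in> {0..1} \<Longrightarrow> (\<lambda>r. a r (picard_iterate a V0 k r)) integrable_on {0..t}"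
  by (intro integrable_continuous_real continuous_on_subset
      [OF continuous_on_linear_family_apply[OF lin cont continuous_on_picard_iterate]]) auto

lemma picard_iterate_increment_bound:
  assumes M: "M \<ge> 0" "\<And>t x. t \<in> {0..1} \<Longrightarrow> norm (a t x) \<le> M * norm x"
    and C: "\<And>t. t \<in> {0..1} \<Longrightarrow> norm (picard_iterate a V0 1 t - V0) \<le> C"
    and t: "t \<in> {0..1}"
  shows "norm (picard_iterate a V0 (Suc k) t - picard_iterate a V0 k t) \<le> C * M ^ k * t ^ k / fact k"
  using t
proof (induction k arbitrary: t)
  case 0
  then show ?case using C by simp
next
  case (Suc k)
  let ?P = "picard_iterate a V0" and ?bound = "\<lambda>r. C * M ^ Suc k * r ^ k / fact k"
  have step: "?P (Suc n) t = V0 + integral {0..t} (\<lambda>r. a r (?P n r))" for n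
    by simp
  have "?P (Suc (Suc k)) t - ?P (Suc k) t
      = integral {0..t} (\<lambda>r. a r (?P (Suc k) r)) - integral {0..t} (\<lambda>r. a r (?P k r))"
    unfolding step[of "Suc k"] step[of k] by simp
  also have "\<dots> = integral {0..t} (\<lambda>r. a r (?P (Suc k) r) - a r (?P k r))"
    by (rule integral_diff[symmetric]) (intro integrable_picard_iterate Suc.prems)+
  also have "\<dots> = integral {0..t} (\<lambda>r. a r (?P (Suc k) r - ?P k r))"
    by (intro integral_cong)
      (use Suc.prems in \<open>auto simp: linear_diff[OF lin] simp del: picard_iterate.simps\<close>)
  also have "norm \<dots> \<le> integral {0..t} ?bound"
  proof (rule integral_norm_bound_integral)
    show "(\<lambda>r. a r (?P (Suc k) r - ?P k r)) integrable_on {0..t}"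
      using integrable_diff[OF integrable_picard_iterate[where k="Suc k"] integrable_picard_iterate[where k=k],
          OF Suc.prems Suc.prems]
      by (rule integrable_eq) (use Suc.prems in \<open>auto simp: linear_diff[OF lin]\<close>)
    show "?bound integrable_on {0..t}"
      by (intro integrable_continuous_real continuous_intros) simp
    fix r assume r: "r \<in> {0..t}"
    then have "r \<in> {0..1}" using Suc.prems by auto
    then have "norm (a r (?P (Suc k) r - ?P k r)) \<le> M * (C * M ^ k * r ^ k / fact k)"
      using M Suc.IH by (meson mult_left_mono order_trans)
    then show "norm (a r (?P (Suc k) r - ?P k r)) \<le> ?bound r"
      by (simp add: ac_simps)
  qed
  also have "integral {0..t} ?bound = C * M ^ Suc k * t ^ Suc k / fact (Suc k)"
    using Suc.prems by (intro integral_power_div_fact) simp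
  finally show ?case .
qed

lemma picard_iterate_uniform_limit:
  obtains V where "uniform_limit {0..1} (picard_iterate a V0) V sequentially"
proof -
  obtain M where M: "M \<ge> 0" "\<And>t x. t \<in> {0..1} \<Longrightarrow> norm (a t x) \<le> M * norm x"
    using linear_family_uniform_bound[OF lin cont] by blast
  let ?D = "\<lambda>k t. picard_iterate a V0 (Suc k) t - picard_iterate a V0 k t"
  have "continuous_on {0..1} (\<lambda>t. picard_iterate a V0 1 t - V0)"
    using continuous_on_picard_iterate[of 1] by (intro continuous_intros) simp_all
  then have "bounded ((\<lambda>t. picard_iterate a V0 1 t - V0) ` {0..1})"
    by (intro compact_imp_bounded compact_continuous_image) auto
  then obtain C where C: "\<And>t. t \<in> {0..1} \<Longrightarrow> norm (picard_iterate a V0 1 t - V0) \<le> C"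
    unfolding bounded_iff by blast
  have C0: "C \<ge> 0"
    using C[of 0] norm_ge_zero order_trans by fastforce
  have "norm (?D k t) \<le> C * (inverse (fact k) * M ^ k)" if "t \<in> {0..1}" for k t
  proof -
    have "norm (?D k t) \<le> C * M ^ k * t ^ k / fact k"
      by (rule picard_iterate_increment_bound[OF M C that])
    also have "\<dots> \<le> C * M ^ k * 1 / fact k"
      using that M C0 by (intro divide_right_mono mult_left_mono) (auto simp: power_le_one)
    finally show ?thesis by (simp add: field_simps)
  qed
  moreover have "summable (\<lambda>k. C * (inverse (fact k) * M ^ k))"
    by (intro summable_mult summable_exp)
  ultimately have "uniform_limit {0..1} (\<lambda>n t. \<Sum>k<n. ?D k t) (\<lambda>t. \<Sum>k. ?D k t) sequentially"
    by (rule Weierstrass_m_test)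
  then have "uniform_limit {0..1} (\<lambda>n t. V0 + (\<Sum>k<n. ?D k t)) (\<lambda>t. V0 + (\<Sum>k. ?D k t)) sequentially"
    by (intro uniform_limit_intros)
  moreover have "V0 + (\<Sum>k<n. ?D k t) = picard_iterate a V0 n t" for n t
    by (induction n) (auto simp: algebra_simps simp del: picard_iterate.simps(2))
  ultimately show thesis
    using that by simp
qed

lemma picard_limit_integral_equation:
  assumes lim: "uniform_limit {0..1} (picard_iterate a V0) V sequentially" and t: "t \<in> {0..1}"
  shows "V t = V0 + integral {0..t} (\<lambda>r. a r (V r))"
proof -
  let ?P = "picard_iterate a V0"
  obtain M where M: "M \<ge> 0" "\<And>t x. t \<in> {0..1} \<Longrightarrow> norm (a t x) \<le> M * norm x"
    using linear_family_uniform_bound[OF lin cont] by blast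
  have "uniform_limit {0..t} (\<lambda>n r. a r (?P n r)) (\<lambda>r. a r (V r)) sequentially"
    using t by (intro uniform_limit_linear_family_apply[OF uniform_limit_on_subset[OF lim] lin M]) auto
  moreover have "continuous_on {0..t} (\<lambda>r. a r (?P n r))" for n
    using t by (intro continuous_on_subset
        [OF continuous_on_linear_family_apply[OF lin cont continuous_on_picard_iterate]]) auto
  ultimately obtain I J where I: "\<And>n. ((\<lambda>r. a r (?P n r)) has_integral I n) {0..t}"
    and J: "((\<lambda>r. a r (V r)) has_integral J) {0..t}" and IJ: "I \<longlonglongrightarrow> J"
    by (rule uniform_limit_integral) auto
  have "(\<lambda>n. V0 + I n) \<longlonglongrightarrow> V0 + J"
    using IJ by (intro tendsto_add tendsto_const)
  then have "(\<lambda>n. ?P (Suc n) t) \<longlonglongrightarrow> V0 + J"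
    by (simp only: picard_iterate.simps integral_unique[OF I])
  moreover have "(\<lambda>n. ?P (Suc n) t) \<longlonglongrightarrow> V t"
    using tendsto_uniform_limitI[OF lim t] by (rule LIMSEQ_Suc)
  ultimately show ?thesis
    using LIMSEQ_unique integral_unique[OF J] by metis
qed

lemma linear_ode_exists:
  obtains V where "V 0 = V0" and "\<And>t. t \<in> {0..1} \<Longrightarrow> (V has_vector_derivative a t (V t)) (at t within {0..1})"
proof -
  obtain V where lim: "uniform_limit {0..1} (picard_iterate a V0) V sequentially"
    using picard_iterate_uniform_limit by blast
  have "continuous_on {0..1} V"
    by (rule uniform_limit_theorem[OF _ lim]) (auto intro: continuous_on_picard_iterate always_eventually)
  with lin cont have contaV: "continuous_on {0..1} (\<lambda>r. a r (V r))"
    by (rule continuous_on_linear_family_apply)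
  note V_eq = picard_limit_integral_equation[OF lim]
  show thesis
  proof (rule that)
    show "V 0 = V0" using V_eq[of 0] by simp
    fix t :: real assume t: "t \<in> {0..1}"
    have "((\<lambda>u. V0 + integral {0..u} (\<lambda>r. a r (V r))) has_vector_derivative a t (V t)) (at t within {0..1})"
      using has_vector_derivative_add[OF has_vector_derivative_const integral_has_vector_derivative[OF contaV t]]
      by simp
    then show "(V has_vector_derivative a t (V t)) (at t within {0..1})"
      by (rule has_vector_derivative_transform[OF t V_eq, rotated])
  qed
qed

lemma linear_ode_unique:
  assumes X: "\<And>t. t \<in> {0..1} \<Longrightarrow> (X has_vector_derivative a t (X t)) (at t within {0..1})"
    and Y: "\<And>t. t \<in> {0..1} \<Longrightarrow> (Y has_vector_derivative a t (Y t)) (at t within {0..1})"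
    and "X 0 = Y 0" and t: "t \<in> {0..1}"
  shows "X t = Y t"
proof -
  obtain M where M: "M \<ge> 0" "\<And>t x. t \<in> {0..1} \<Longrightarrow> norm (a t x) \<le> M * norm x"
    using linear_family_uniform_bound[OF lin cont] by blast
  have "norm (X t - Y t) \<le> (norm (X 0 - Y 0) + 0) * exp (M + 1)"
  proof (rule gronwall_unit_interval[OF _ _ M(1) order_refl t])
    fix t :: real assume t: "t \<in> {0..1}"
    show "((\<lambda>t. X t - Y t) has_vector_derivative a t (X t) - a t (Y t)) (at t within {0..1})"
      by (intro has_vector_derivative_diff X Y t)
    show "norm (a t (X t) - a t (Y t)) \<le> M * norm (X t - Y t) + 0"
      using M(2)[OF t, of "X t - Y t"] by (simp add: linear_diff[OF lin[OF t]])
  qed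
  then show ?thesis
    using \<open>X 0 = Y 0\<close> by simp
qed

end

lemma has_vector_derivative_at_0I:
  assumes "\<And>e. e > 0 \<Longrightarrow> \<exists>d>0. \<forall>s. \<bar>s\<bar> < d \<longrightarrow> norm (f s - f 0 - s *\<^sub>R f') \<le> e * \<bar>s\<bar>"
  shows "(f has_vector_derivative f') (at 0)"
  unfolding has_vector_derivative_def has_derivative_at_alt
  using assms by (simp add: bounded_linear_scaleR_left)

lemma has_vector_derivative_at_0D:
  assumes "(f has_vector_derivative f') (at 0)" and "e > 0"
  obtains d where "d > 0" and "\<And>s. \<bar>s\<bar> < d \<Longrightarrow> norm (f s - f 0 - s *\<^sub>R f') \<le> e * \<bar>s\<bar>"
proof -
  have "\<forall>e>0. \<exists>d>0. \<forall>y. norm (y - 0) < d \<longrightarrow> norm (f y - f 0 - (y - 0) *\<^sub>R f') \<le> e * norm (y - 0)"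
    using assms(1) unfolding has_vector_derivative_def has_derivative_at_alt by (rule conjunct2)
  then obtain d where "d > 0" and "\<forall>y. norm (y - 0) < d \<longrightarrow> norm (f y - f 0 - (y - 0) *\<^sub>R f') \<le> e * norm (y - 0)"
    using \<open>e > 0\<close> by blast
  then show thesis
    by (intro that) auto
qed

lemma has_vector_derivative_imp_local_lipschitz:
  assumes "(f has_vector_derivative f') (at 0)"
  obtains \<rho> where "\<rho> > 0" and "\<And>s. \<bar>s\<bar> \<le> \<rho> \<Longrightarrow> norm (f s - f 0) \<le> (norm f' + 1) * \<bar>s\<bar>"
proof -
  obtain d where "d > 0" and d: "\<And>s. \<bar>s\<bar> < d \<Longrightarrow> norm (f s - f 0 - s *\<^sub>R f') \<le> 1 * \<bar>s\<bar>"
    by (rule has_vector_derivative_at_0D[OF assms zero_less_one]) blast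
  show thesis
  proof (rule that)
    show "d / 2 > 0" using \<open>d > 0\<close> by simp
    fix s :: real assume "\<bar>s\<bar> \<le> d / 2"
    then have "norm (f s - f 0 - s *\<^sub>R f') \<le> \<bar>s\<bar>"
      using d[of s] \<open>d > 0\<close> by simp
    then show "norm (f s - f 0) \<le> (norm f' + 1) * \<bar>s\<bar>"
      using norm_triangle_sub[of "f s - f 0" "s *\<^sub>R f'"] by (simp add: algebra_simps)
  qed
qed

locale linear_ode_family =
  fixes a :: "real \<Rightarrow> real \<Rightarrow> 'a::euclidean_space \<Rightarrow> 'a"
    and b :: "real \<Rightarrow> 'a \<Rightarrow> 'a"
    and \<delta> M :: real
  assumes delta_pos: "\<delta> > 0" and M_nonneg: "M \<ge> 0"
    and linear_a: "\<And>s t. \<bar>s\<bar> \<le> \<delta> \<Longrightarrow> t \<in> {0..1} \<Longrightarrow> linear (a s t)"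
    and norm_a_le: "\<And>s t x. \<bar>s\<bar> \<le> \<delta> \<Longrightarrow> t \<in> {0..1} \<Longrightarrow> norm (a s t x) \<le> M * norm x"
    and linear_b: "\<And>t. t \<in> {0..1} \<Longrightarrow> linear (b t)"
    and norm_b_le: "\<And>t x. t \<in> {0..1} \<Longrightarrow> norm (b t x) \<le> M * norm x"
    and a_param_deriv: "\<And>e. e > 0 \<Longrightarrow> \<exists>\<eta>>0. \<forall>s t x. \<bar>s\<bar> \<le> \<eta> \<longrightarrow> t \<in> {0..1} \<longrightarrow>
        norm (a s t x - a 0 t x - s *\<^sub>R b t x) \<le> e * \<bar>s\<bar> * norm x"
begin

lemma smaller_radius:
  assumes "0 < \<delta>'" and "\<delta>' \<le> \<delta>"
  shows "linear_ode_family a b \<delta>' M"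
proof (rule linear_ode_family.intro)
  show "linear (a s t)" if "\<bar>s\<bar> \<le> \<delta>'" "t \<in> {0..1}" for s t
    using that assms(2) by (intro linear_a) auto
  show "norm (a s t x) \<le> M * norm x" if "\<bar>s\<bar> \<le> \<delta>'" "t \<in> {0..1}" for s t x
    using that assms(2) by (intro norm_a_le) auto
qed (use assms(1) M_nonneg linear_b norm_b_le a_param_deriv in auto)

lemma a_param_lipschitz:
  obtains \<eta> where "\<eta> > 0" "\<eta> \<le> \<delta>"
    and "\<And>s t x. \<bar>s\<bar> \<le> \<eta> \<Longrightarrow> t \<in> {0..1} \<Longrightarrow> norm (a s t x - a 0 t x) \<le> (M + 1) * \<bar>s\<bar> * norm x"
proof -
  obtain \<eta> where \<eta>: "\<eta> > 0" and deriv: "\<And>s t x. \<bar>s\<bar> \<le> \<eta> \<Longrightarrow> t \<in> {0..1} \<Longrightarrow>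
      norm (a s t x - a 0 t x - s *\<^sub>R b t x) \<le> 1 * \<bar>s\<bar> * norm x"
    using a_param_deriv[of 1] by auto
  show thesis
  proof (rule that)
    show "min \<eta> \<delta> > 0" "min \<eta> \<delta> \<le> \<delta>" using \<eta> delta_pos by auto
    fix s t :: real and x :: 'a
    assume s: "\<bar>s\<bar> \<le> min \<eta> \<delta>" and t: "t \<in> {0..1}"
    have "norm (a s t x - a 0 t x) \<le> norm (a s t x - a 0 t x - s *\<^sub>R b t x) + norm (s *\<^sub>R b t x)"
      using norm_triangle_sub[of "a s t x - a 0 t x" "s *\<^sub>R b t x"] by (simp add: add.commute)
    also have "\<dots> \<le> 1 * \<bar>s\<bar> * norm x + \<bar>s\<bar> * (M * norm x)"
      using s t norm_b_le[OF t, of x] by (intro add_mono deriv) (auto intro: mult_left_mono)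
    finally show "norm (a s t x - a 0 t x) \<le> (M + 1) * \<bar>s\<bar> * norm x"
      by (simp add: algebra_simps)
  qed
qed

context
  fixes U :: "real \<Rightarrow> real \<Rightarrow> 'a"
  assumes solves: "\<And>s t. \<bar>s\<bar> \<le> \<delta> \<Longrightarrow> t \<in> {0..1} \<Longrightarrow>
    (U s has_vector_derivative a s t (U s t)) (at t within {0..1})"
begin

lemma solution_param_lipschitz:
  assumes "\<rho> > 0" and L: "\<And>s. \<bar>s\<bar> \<le> \<rho> \<Longrightarrow> norm (U s 0 - U 0 0) \<le> L * \<bar>s\<bar>" and "L \<ge> 0"
  obtains \<eta> B C where "\<eta> > 0" "\<eta> \<le> \<delta>" "B \<ge> 0" "C \<ge> 0"
    and "\<And>s t. \<bar>s\<bar> \<le> \<eta> \<Longrightarrow> t \<in> {0..1} \<Longrightarrow> norm (U s t) \<le> B"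
    and "\<And>s t. \<bar>s\<bar> \<le> \<eta> \<Longrightarrow> t \<in> {0..1} \<Longrightarrow> norm (U s t - U 0 t) \<le> C * \<bar>s\<bar>"
proof -
  obtain \<eta>0 where \<eta>0: "\<eta>0 > 0" "\<eta>0 \<le> \<delta>" and lip: "\<And>s t x. \<bar>s\<bar> \<le> \<eta>0 \<Longrightarrow> t \<in> {0..1} \<Longrightarrow>
      norm (a s t x - a 0 t x) \<le> (M + 1) * \<bar>s\<bar> * norm x"
    using a_param_lipschitz by blast
  define \<eta> where "\<eta> = min \<eta>0 \<rho>"
  define B where "B = (norm (U 0 0) + L * \<rho>) * exp (M + 1)"
  define C where "C = (L + (M + 1) * B) * exp (M + 1)"
  have \<eta>: "\<eta> > 0" "\<eta> \<le> \<delta>" "\<eta> \<le> \<eta>0" "\<eta> \<le> \<rho>"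
    using \<eta>0 \<open>\<rho> > 0\<close> by (auto simp: \<eta>_def)
  have B0: "B \<ge> 0" and C0: "C \<ge> 0"
    using \<open>\<rho> > 0\<close> \<open>L \<ge> 0\<close> M_nonneg by (auto simp: B_def C_def)
  have U_le: "norm (U s t) \<le> B" if s: "\<bar>s\<bar> \<le> \<eta>" and t: "t \<in> {0..1}" for s t
  proof -
    have "norm (U s t) \<le> (norm (U s 0) + 0) * exp (M + 1)"
      using s \<eta> by (intro gronwall_unit_interval[OF solves _ M_nonneg order_refl t]) (auto intro: norm_a_le)
    also have "norm (U s 0) \<le> norm (U 0 0) + L * \<rho>"
      using norm_triangle_sub[of "U s 0" "U 0 0"] L[of s] mult_left_mono[of "\<bar>s\<bar>" \<rho> L] s \<eta> \<open>L \<ge> 0\<close>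
      by linarith
    finally show ?thesis
      by (simp add: B_def)
  qed
  have "norm (U s t - U 0 t) \<le> C * \<bar>s\<bar>" if s: "\<bar>s\<bar> \<le> \<eta>" and t: "t \<in> {0..1}" for s t
  proof -
    have "norm (U s t - U 0 t) \<le> (norm (U s 0 - U 0 0) + (M + 1) * \<bar>s\<bar> * B) * exp (M + 1)"
    proof (rule gronwall_unit_interval[OF _ _ M_nonneg _ t])
      fix t :: real assume t: "t \<in> {0..1}"
      show "((\<lambda>t. U s t - U 0 t) has_vector_derivative a s t (U s t) - a 0 t (U 0 t)) (at t within {0..1})"
        using s \<eta> delta_pos by (intro has_vector_derivative_diff solves t) auto
      have "a s t (U s t) - a 0 t (U 0 t) = a 0 t (U s t - U 0 t) + (a s t (U s t) - a 0 t (U s t))"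
        using t delta_pos by (simp add: linear_diff[OF linear_a])
      also have "norm \<dots> \<le> M * norm (U s t - U 0 t) + (M + 1) * \<bar>s\<bar> * B"
      proof (rule order_trans[OF norm_triangle_ineq add_mono])
        show "norm (a 0 t (U s t - U 0 t)) \<le> M * norm (U s t - U 0 t)"
          using t delta_pos by (intro norm_a_le) auto
        have "norm (a s t (U s t) - a 0 t (U s t)) \<le> (M + 1) * \<bar>s\<bar> * norm (U s t)"
          using s t \<eta> by (intro lip) auto
        also have "\<dots> \<le> (M + 1) * \<bar>s\<bar> * B"
          using U_le[OF s t] M_nonneg by (intro mult_left_mono) auto
        finally show "norm (a s t (U s t) - a 0 t (U s t)) \<le> (M + 1) * \<bar>s\<bar> * B" .
      qed
      finally show "norm (a s t (U s t) - a 0 t (U 0 t)) \<le> M * norm (U s t - U 0 t) + (M + 1) * \<bar>s\<bar> * B" .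
    qed (use B0 M_nonneg in auto)
    also have "\<dots> \<le> (L * \<bar>s\<bar> + (M + 1) * \<bar>s\<bar> * B) * exp (M + 1)"
      using L[of s] s \<eta> by (intro mult_right_mono add_right_mono) auto
    finally show ?thesis
      by (simp add: C_def algebra_simps)
  qed
  with \<eta> B0 C0 U_le show thesis
    using that by blast
qed

lemma linearized_defect_le:
  assumes s: "\<bar>s\<bar> \<le> \<delta>" and t: "t \<in> {0..1}"
  shows "norm (a s t (U s t) - a 0 t (U 0 t) - s *\<^sub>R (a 0 t (D t) + b t (U 0 t)))
    \<le> M * norm (U s t - U 0 t - s *\<^sub>R D t) + norm (a s t (U s t) - a 0 t (U s t) - s *\<^sub>R b t (U s t))
      + \<bar>s\<bar> * (M * norm (U s t - U 0 t))"
proof -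
  let ?E = "U s t - U 0 t - s *\<^sub>R D t" and ?R = "a s t (U s t) - a 0 t (U s t) - s *\<^sub>R b t (U s t)"
  have eq: "a s t (U s t) - a 0 t (U 0 t) - s *\<^sub>R (a 0 t (D t) + b t (U 0 t))
    = a 0 t ?E + ?R + s *\<^sub>R b t (U s t - U 0 t)"
    using assms delta_pos
    by (simp add: linear_diff[OF linear_a] linear_add[OF linear_a] linear_scale[OF linear_a]
        linear_diff[OF linear_b] scaleR_diff_right algebra_simps)
  have "norm (a 0 t ?E + ?R + s *\<^sub>R b t (U s t - U 0 t))
      \<le> norm (a 0 t ?E) + norm ?R + norm (s *\<^sub>R b t (U s t - U 0 t))"
    by (rule order_trans[OF norm_triangle_ineq add_right_mono[OF norm_triangle_ineq]])
  moreover have "norm (a 0 t ?E) \<le> M * norm ?E"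
    using t delta_pos by (intro norm_a_le) auto
  moreover have "norm (s *\<^sub>R b t (U s t - U 0 t)) \<le> \<bar>s\<bar> * (M * norm (U s t - U 0 t))"
    using norm_b_le[OF t, of "U s t - U 0 t"] by (simp add: mult_left_mono)
  ultimately show ?thesis
    unfolding eq by linarith
qed

lemma linearized_defect_small:
  assumes U0: "((\<lambda>s. U s 0) has_vector_derivative w') (at 0)" and "\<epsilon> > 0"
  obtains \<eta> where "\<eta> > 0" and "\<eta> \<le> \<delta>"
    and "\<And>s t. \<bar>s\<bar> \<le> \<eta> \<Longrightarrow> t \<in> {0..1} \<Longrightarrow>
      norm (a s t (U s t) - a 0 t (U 0 t) - s *\<^sub>R (a 0 t (D t) + b t (U 0 t)))
        \<le> M * norm (U s t - U 0 t - s *\<^sub>R D t) + \<epsilon> * \<bar>s\<bar>"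
proof -
  obtain \<rho> where "\<rho> > 0" and "\<And>s. \<bar>s\<bar> \<le> \<rho> \<Longrightarrow> norm (U s 0 - U 0 0) \<le> (norm w' + 1) * \<bar>s\<bar>"
    using has_vector_derivative_imp_local_lipschitz[OF U0] by blast
  then obtain \<eta>0 B C where "\<eta>0 > 0" "\<eta>0 \<le> \<delta>" "B \<ge> 0" "C \<ge> 0"
    and U_le: "\<And>s t. \<bar>s\<bar> \<le> \<eta>0 \<Longrightarrow> t \<in> {0..1} \<Longrightarrow> norm (U s t) \<le> B"
    and U_lip: "\<And>s t. \<bar>s\<bar> \<le> \<eta>0 \<Longrightarrow> t \<in> {0..1} \<Longrightarrow> norm (U s t - U 0 t) \<le> C * \<bar>s\<bar>"
    by (rule solution_param_lipschitz) auto
  obtain \<eta>1 where "\<eta>1 > 0" and a_approx: "\<And>s t x. \<bar>s\<bar> \<le> \<eta>1 \<Longrightarrow> t \<in> {0..1} \<Longrightarrow>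
      norm (a s t x - a 0 t x - s *\<^sub>R b t x) \<le> \<epsilon> / (2 * (B + 1)) * \<bar>s\<bar> * norm x"
    using a_param_deriv[of "\<epsilon> / (2 * (B + 1))"] \<open>\<epsilon> > 0\<close> \<open>B \<ge> 0\<close> by auto
  have MC: "M * C + 1 > 0"
    using M_nonneg \<open>C \<ge> 0\<close> by (simp add: add_nonneg_pos)
  show thesis
  proof (rule that)
    show "min (min \<eta>0 \<eta>1) (\<epsilon> / (2 * (M * C + 1))) > 0"
      using \<open>\<eta>0 > 0\<close> \<open>\<eta>1 > 0\<close> \<open>\<epsilon> > 0\<close> MC by simp
    show "min (min \<eta>0 \<eta>1) (\<epsilon> / (2 * (M * C + 1))) \<le> \<delta>"
      using \<open>\<eta>0 \<le> \<delta>\<close> by linarith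
    fix s t :: real assume "\<bar>s\<bar> \<le> min (min \<eta>0 \<eta>1) (\<epsilon> / (2 * (M * C + 1)))" and t: "t \<in> {0..1}"
    then have s: "\<bar>s\<bar> \<le> \<eta>0" "\<bar>s\<bar> \<le> \<eta>1" "\<bar>s\<bar> * (M * C) \<le> \<epsilon> / 2"
      using MC by (auto simp: pos_le_divide_eq algebra_simps)
    have "norm (a s t (U s t) - a 0 t (U s t) - s *\<^sub>R b t (U s t))
        \<le> \<epsilon> / (2 * (B + 1)) * \<bar>s\<bar> * norm (U s t)"
      using s t by (intro a_approx)
    also have "\<dots> = \<epsilon> / 2 * \<bar>s\<bar> * (norm (U s t) / (B + 1))"
      using \<open>B \<ge> 0\<close> by (simp add: field_simps)
    also have "\<dots> \<le> \<epsilon> / 2 * \<bar>s\<bar>"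
      using U_le[OF s(1) t] \<open>B \<ge> 0\<close> \<open>\<epsilon> > 0\<close> by (intro mult_left_le) auto
    finally have defect: "norm (a s t (U s t) - a 0 t (U s t) - s *\<^sub>R b t (U s t)) \<le> \<epsilon> / 2 * \<bar>s\<bar>" .
    have "M * norm (U s t - U 0 t) \<le> M * (C * \<bar>s\<bar>)"
      using U_lip[OF s(1) t] M_nonneg by (rule mult_left_mono)
    from mult_left_mono[OF this abs_ge_zero[of s]]
    have "\<bar>s\<bar> * (M * norm (U s t - U 0 t)) \<le> (\<bar>s\<bar> * (M * C)) * \<bar>s\<bar>"
      by (simp add: ac_simps)
    also have "\<dots> \<le> \<epsilon> / 2 * \<bar>s\<bar>"
      using s(3) by (rule mult_right_mono) simp
    finally have drift: "\<bar>s\<bar> * (M * norm (U s t - U 0 t)) \<le> \<epsilon> / 2 * \<bar>s\<bar>" .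
    have "\<bar>s\<bar> \<le> \<delta>"
      using s(1) \<open>\<eta>0 \<le> \<delta>\<close> by simp
    from linearized_defect_le[OF this t, of D] defect drift
    show "norm (a s t (U s t) - a 0 t (U 0 t) - s *\<^sub>R (a 0 t (D t) + b t (U 0 t)))
        \<le> M * norm (U s t - U 0 t - s *\<^sub>R D t) + \<epsilon> * \<bar>s\<bar>"
      by linarith
  qed
qed

lemma solution_has_vector_derivative_param:
  assumes U0: "((\<lambda>s. U s 0) has_vector_derivative w') (at 0)"
    and D0: "D 0 = w'"
    and D: "\<And>t. t \<in> {0..1} \<Longrightarrow> (D has_vector_derivative a 0 t (D t) + b t (U 0 t)) (at t within {0..1})"
    and t: "t \<in> {0..1}"
  shows "((\<lambda>s. U s t) has_vector_derivative D t) (at 0)"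
proof (rule has_vector_derivative_at_0I)
  fix e :: real assume "e > 0"
  define e1 where "e1 = e / (2 * exp (M + 1))"
  have "e1 > 0" using \<open>e > 0\<close> by (simp add: e1_def)
  obtain \<eta> where "\<eta> > 0" "\<eta> \<le> \<delta>" and defect: "\<And>s t. \<bar>s\<bar> \<le> \<eta> \<Longrightarrow> t \<in> {0..1} \<Longrightarrow>
      norm (a s t (U s t) - a 0 t (U 0 t) - s *\<^sub>R (a 0 t (D t) + b t (U 0 t)))
        \<le> M * norm (U s t - U 0 t - s *\<^sub>R D t) + e1 * \<bar>s\<bar>"
    by (rule linearized_defect_small[OF U0 \<open>e1 > 0\<close>, where D = D]) blast
  obtain d0 where "d0 > 0" and U0_close: "\<And>s. \<bar>s\<bar> < d0 \<Longrightarrow> norm (U s 0 - U 0 0 - s *\<^sub>R w') \<le> e1 * \<bar>s\<bar>"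
    by (rule has_vector_derivative_at_0D[OF U0 \<open>e1 > 0\<close>]) blast
  show "\<exists>d>0. \<forall>s. \<bar>s\<bar> < d \<longrightarrow> norm (U s t - U 0 t - s *\<^sub>R D t) \<le> e * \<bar>s\<bar>"
  proof (intro exI[of _ "min \<eta> d0"] conjI allI impI)
    show "min \<eta> d0 > 0" using \<open>\<eta> > 0\<close> \<open>d0 > 0\<close> by simp
    fix s :: real assume "\<bar>s\<bar> < min \<eta> d0"
    then have s: "\<bar>s\<bar> \<le> \<eta>" "\<bar>s\<bar> < d0" by auto
    have "norm (U s t - U 0 t - s *\<^sub>R D t) \<le> (norm (U s 0 - U 0 0 - s *\<^sub>R D 0) + e1 * \<bar>s\<bar>) * exp (M + 1)"
    proof (rule gronwall_unit_interval[OF _ defect[OF s(1)] M_nonneg _ t])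
      fix t :: real assume "t \<in> {0..1}"
      then show "((\<lambda>t. U s t - U 0 t - s *\<^sub>R D t) has_vector_derivative
          a s t (U s t) - a 0 t (U 0 t) - s *\<^sub>R (a 0 t (D t) + b t (U 0 t))) (at t within {0..1})"
        using s \<open>\<eta> \<le> \<delta>\<close> delta_pos by (intro has_vector_derivative_diff solves
            bounded_linear.has_vector_derivative[OF bounded_linear_scaleR_right] D) auto
    qed (use \<open>e1 > 0\<close> in auto)
    also have "\<dots> \<le> (e1 * \<bar>s\<bar> + e1 * \<bar>s\<bar>) * exp (M + 1)"
      using U0_close[OF s(2)] D0 by (intro mult_right_mono add_right_mono) auto
    also have "\<dots> = e * \<bar>s\<bar>"
      by (simp add: e1_def)
    finally show "norm (U s t - U 0 t - s *\<^sub>R D t) \<le> e * \<bar>s\<bar>" .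
  qed
qed

end

end

section \<open>Symmetric and positive definite matrices\<close>

lemma transpose_add: "transpose (A + B) = transpose A + transpose (B :: 'a::semiring_1^'n^'m)"
  by (simp add: transpose_def vec_eq_iff)

lemma transpose_diff: "transpose (A - B) = transpose A - transpose (B :: 'a::ring_1^'n^'m)"
  by (simp add: transpose_def vec_eq_iff)

lemma transpose_uminus: "transpose (- A) = - transpose (A :: 'a::ring_1^'n^'m)"
  by (simp add: transpose_def vec_eq_iff)

lemma bounded_linear_transpose: "bounded_linear (transpose :: real^'n^'m \<Rightarrow> real^'m^'n)"
  by (simp add: linear_conv_bounded_linear[symmetric] linearI transpose_add transpose_scalar)

lemma Sym_0 [simp]: "0 \<in> Sym"
  by (simp add: Sym_def transpose_def vec_eq_iff)

lemma Sym_1 [simp]: "mat 1 \<in> Sym"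
  by (simp add: Sym_def)

lemma Sym_add [intro]: "A \<in> Sym \<Longrightarrow> B \<in> Sym \<Longrightarrow> A + B \<in> Sym"
  by (simp add: Sym_def transpose_add)

lemma Sym_diff [intro]: "A \<in> Sym \<Longrightarrow> B \<in> Sym \<Longrightarrow> A - B \<in> Sym"
  by (simp add: Sym_def transpose_diff)

lemma Sym_scaleR [intro]: "A \<in> Sym \<Longrightarrow> c *\<^sub>R A \<in> Sym"
  by (simp add: Sym_def transpose_scalar)

lemma Sym_sum [intro]: "(\<And>i. i \<in> I \<Longrightarrow> f i \<in> Sym) \<Longrightarrow> sum f I \<in> Sym"
  by (induction I rule: infinite_finite_induct) auto

lemma SPD_imp_Sym: "S \<in> SPD \<Longrightarrow> S \<in> Sym"
  by (simp add: SPD_def Sym_def)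

lemma has_vector_derivative_Sym:
  fixes w :: "real \<Rightarrow> 'n::finite mat"
  assumes "\<delta> > 0" and "\<And>s. \<bar>s\<bar> < \<delta> \<Longrightarrow> w s \<in> Sym" and w': "(w has_vector_derivative w') (at 0)"
  shows "w' \<in> Sym"
proof -
  have "((\<lambda>s. transpose (w s)) has_vector_derivative transpose w') (at 0)"
    by (rule bounded_linear.has_vector_derivative[OF bounded_linear_transpose w'])
  moreover have "((\<lambda>s. transpose (w s)) has_vector_derivative w') (at 0 within UNIV)"
    by (rule has_vector_derivative_transform_within[OF w' \<open>\<delta> > 0\<close>])
      (use assms(2) in \<open>auto simp: dist_real_def Sym_def\<close>)
  ultimately show ?thesis
    using vector_derivative_unique_at by (auto simp: Sym_def)
qed

definition sym_part :: "'n::finite mat \<Rightarrow> 'n mat" where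
  "sym_part X = (1/2) *\<^sub>R (X + transpose X)"

lemma sym_part_Sym [simp, intro]: "sym_part X \<in> Sym"
  by (simp add: sym_part_def Sym_def transpose_scalar transpose_add add.commute)

lemma sym_part_id: "X \<in> Sym \<Longrightarrow> sym_part X = X"
  by (simp add: sym_part_def Sym_def scaleR_2[symmetric])

lemma linear_sym_part: "linear sym_part"
  by (rule linearI) (simp_all add: sym_part_def transpose_add transpose_scalar algebra_simps)

lemma sym_part_transpose [simp]: "sym_part (transpose X) = sym_part X"
  by (simp add: sym_part_def add.commute)

lemma bilinear_on_Sym_left:
  "bilinear_on_Sym B \<Longrightarrow> A \<in> Sym \<Longrightarrow> A' \<in> Sym \<Longrightarrow> C \<in> Sym \<Longrightarrow> B (a *\<^sub>R A + A') C = a *\<^sub>R B A C + B A' C"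
  unfolding bilinear_on_Sym_def by blast

lemma bilinear_on_Sym_right:
  "bilinear_on_Sym B \<Longrightarrow> A \<in> Sym \<Longrightarrow> A' \<in> Sym \<Longrightarrow> C \<in> Sym \<Longrightarrow> B C (a *\<^sub>R A + A') = a *\<^sub>R B C A + B C A'"
  unfolding bilinear_on_Sym_def by blast

lemma bilinear_on_Sym_zero_left: "bilinear_on_Sym B \<Longrightarrow> C \<in> Sym \<Longrightarrow> B 0 C = 0"
  using bilinear_on_Sym_left[of B 0 0 C 1] by simp

lemma bilinear_on_Sym_zero_right: "bilinear_on_Sym B \<Longrightarrow> C \<in> Sym \<Longrightarrow> B C 0 = 0"
  using bilinear_on_Sym_right[of B 0 0 C 1] by simp

lemma bilinear_on_Sym_sum_left:
  assumes B: "bilinear_on_Sym B" and C: "C \<in> Sym" and "finite I" and A: "\<And>i. i \<in> I \<Longrightarrow> A i \<in> Sym"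
  shows "B (\<Sum>i\<in>I. c i *\<^sub>R A i) C = (\<Sum>i\<in>I. c i *\<^sub>R B (A i) C)"
  using \<open>finite I\<close> A
proof (induction I rule: finite_induct)
  case (insert x F)
  have "(\<Sum>i\<in>F. c i *\<^sub>R A i) \<in> Sym"
    using insert.prems by (intro Sym_sum Sym_scaleR) auto
  then show ?case
    using insert by (simp add: bilinear_on_Sym_left[OF B _ _ C])
qed (simp add: bilinear_on_Sym_zero_left[OF B C])

lemma bilinear_on_Sym_sum_right:
  assumes B: "bilinear_on_Sym B" and C: "C \<in> Sym" and "finite I" and A: "\<And>i. i \<in> I \<Longrightarrow> A i \<in> Sym"
  shows "B C (\<Sum>i\<in>I. c i *\<^sub>R A i) = (\<Sum>i\<in>I. c i *\<^sub>R B C (A i))"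
  using \<open>finite I\<close> A
proof (induction I rule: finite_induct)
  case (insert x F)
  have "(\<Sum>i\<in>F. c i *\<^sub>R A i) \<in> Sym"
    using insert.prems by (intro Sym_sum Sym_scaleR) auto
  then show ?case
    using insert by (simp add: bilinear_on_Sym_right[OF B _ _ C])
qed (simp add: bilinear_on_Sym_zero_right[OF B C])

lemma quadratic_form_le_entry_sum:
  "\<bar>x \<bullet> (v *v x)\<bar> \<le> (\<Sum>i\<in>UNIV. \<Sum>j\<in>UNIV. \<bar>v $ i $ j\<bar>) * (norm x)\<^sup>2"
proof -
  have "\<bar>x \<bullet> (v *v x)\<bar> \<le> norm x * norm (v *v x)"
    by (rule Cauchy_Schwarz_ineq2)
  also have "norm (v *v x) \<le> onorm ((*v) v) * norm x"
    by (rule onorm) simp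
  also have "onorm ((*v) v) \<le> (\<Sum>i\<in>UNIV. \<Sum>j\<in>UNIV. \<bar>v $ i $ j\<bar>)"
    by (rule onorm_le_matrix_component_sum)
  finally show ?thesis
    by (simp add: power2_eq_square mult_left_mono mult_right_mono ac_simps)
qed

lemma SPD_quadratic_lower_bound:
  assumes S: "S \<in> SPD"
  obtains l where "l > 0" and "\<And>x. l * (norm x)\<^sup>2 \<le> x \<bullet> (S *v x)"
proof -
  have cont: "continuous_on (sphere 0 1) (\<lambda>x::real^'a. x \<bullet> (S *v x))"
    by (intro continuous_intros linear_continuous_on) simp
  have "sphere (0::real^'a) 1 \<noteq> {}"
    using norm_axis_1[of undefined] by (metis dist_0_norm empty_iff mem_sphere)
  then obtain x0 where x0: "x0 \<in> sphere 0 1"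
    and min: "\<And>y. y \<in> sphere 0 1 \<Longrightarrow> x0 \<bullet> (S *v x0) \<le> y \<bullet> (S *v y)"
    using continuous_attains_inf[OF compact_sphere _ cont] by blast
  show thesis
  proof (rule that)
    have "x0 \<noteq> 0"
      using x0 by auto
    then show "x0 \<bullet> (S *v x0) > 0"
      using S by (simp add: SPD_def)
    fix x :: "real^'a"
    show "(x0 \<bullet> (S *v x0)) * (norm x)\<^sup>2 \<le> x \<bullet> (S *v x)"
    proof (cases "x = 0")
      case False
      define y where "y = (1 / norm x) *\<^sub>R x"
      have "x \<bullet> (S *v x) = (norm x)\<^sup>2 * (y \<bullet> (S *v y))"
        using False by (simp add: y_def matrix_scaleR_vector_ac scaleR_matrix_vector_assoc[symmetric]
            power2_eq_square)
      moreover have "x0 \<bullet> (S *v x0) \<le> y \<bullet> (S *v y)"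
        using False by (intro min) (simp add: y_def)
      ultimately show ?thesis
        by (simp add: mult_right_mono mult.commute)
    qed simp
  qed
qed

lemma SPD_of_quadratic_lower_bound:
  assumes "Q \<in> Sym" and "l > 0" and "\<And>x. l * (norm x)\<^sup>2 \<le> x \<bullet> (Q *v x)"
  shows "Q \<in> SPD"
proof -
  have "x \<bullet> (Q *v x) > 0" if "x \<noteq> 0" for x
    using assms(3)[of x] \<open>l > 0\<close> that by (smt (verit) mult_pos_pos zero_less_norm_iff zero_less_power)
  then show ?thesis
    using \<open>Q \<in> Sym\<close> by (simp add: SPD_def Sym_def)
qed

lemma SPD_segment_neighbourhood:
  assumes S: "S \<in> SPD" and v: "v \<in> Sym"
  obtains \<delta> where "\<delta> > 0" and "\<And>t r. t \<in> {0..1} \<Longrightarrow> \<bar>r\<bar> \<le> \<delta> \<Longrightarrow> S + t *\<^sub>R (mat 1 - S) + r *\<^sub>R v \<in> SPD"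
proof -
  obtain l where l: "l > 0" "\<And>x. l * (norm x)\<^sup>2 \<le> x \<bullet> (S *v x)"
    using SPD_quadratic_lower_bound[OF S] by blast
  define cv where "cv = (\<Sum>i\<in>UNIV. \<Sum>j\<in>UNIV. \<bar>v $ i $ j\<bar>)"
  define m where "m = min l 1"
  define \<delta> where "\<delta> = m / (2 * (cv + 1))"
  have cv: "cv \<ge> 0" by (simp add: cv_def sum_nonneg)
  have m: "m > 0" "m \<le> l" "m \<le> 1" using l by (auto simp: m_def)
  have \<delta>: "\<delta> > 0" "\<delta> * cv \<le> m / 2"
    using m cv by (auto simp: \<delta>_def field_simps)
  show thesis
  proof (rule that[OF \<delta>(1)])
    fix t r :: real assume t: "t \<in> {0..1}" and r: "\<bar>r\<bar> \<le> \<delta>"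
    show "S + t *\<^sub>R (mat 1 - S) + r *\<^sub>R v \<in> SPD"
    proof (rule SPD_of_quadratic_lower_bound)
      show "S + t *\<^sub>R (mat 1 - S) + r *\<^sub>R v \<in> Sym"
        using SPD_imp_Sym[OF S] v by (intro Sym_add Sym_scaleR Sym_diff Sym_1)
      show "m / 2 > 0" using m by simp
      fix x :: "real^'a"
      have "x \<bullet> ((S + t *\<^sub>R (mat 1 - S) + r *\<^sub>R v) *v x)
          = (1 - t) * (x \<bullet> (S *v x)) + t * (norm x)\<^sup>2 + r * (x \<bullet> (v *v x))"
        by (simp add: matrix_vector_mult_add_rdistrib matrix_vector_mult_diff_rdistrib
            scaleR_matrix_vector_assoc[symmetric] inner_add_right inner_diff_right
            power2_norm_eq_inner algebra_simps)
      moreover have "(1 - t) * (l * (norm x)\<^sup>2) \<le> (1 - t) * (x \<bullet> (S *v x))"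
        using t l(2)[of x] by (intro mult_left_mono) auto
      moreover have "- (\<delta> * cv * (norm x)\<^sup>2) \<le> r * (x \<bullet> (v *v x))"
      proof -
        have "\<bar>r * (x \<bullet> (v *v x))\<bar> \<le> \<delta> * (cv * (norm x)\<^sup>2)"
          unfolding abs_mult using r quadratic_form_le_entry_sum[of x v] by (intro mult_mono) (auto simp: cv_def)
        then show ?thesis by (simp add: ac_simps)
      qed
      moreover have "m / 2 * (norm x)\<^sup>2 \<le> ((1 - t) * l + t - \<delta> * cv) * (norm x)\<^sup>2"
      proof (rule mult_right_mono)
        have "(1 - t) * m \<le> (1 - t) * l" "t * m \<le> t"
          using t m mult_left_mono[of m 1 t] by (auto intro: mult_left_mono)
        then show "m / 2 \<le> (1 - t) * l + t - \<delta> * cv"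
          using \<delta>(2) by (simp add: algebra_simps)
      qed simp
      ultimately show "m / 2 * (norm x)\<^sup>2 \<le> x \<bullet> ((S + t *\<^sub>R (mat 1 - S) + r *\<^sub>R v) *v x)"
        by (simp add: algebra_simps)
    qed
  qed
qed

lemma SPD_segment:
  assumes "S \<in> SPD" and "t \<in> {0..1}"
  shows "S + t *\<^sub>R (mat 1 - S) \<in> SPD"
proof -
  obtain \<delta> where "\<delta> > 0"
    and seg: "\<And>t r. t \<in> {0..1} \<Longrightarrow> \<bar>r\<bar> \<le> \<delta> \<Longrightarrow> S + t *\<^sub>R (mat 1 - S) + r *\<^sub>R 0 \<in> SPD"
    using SPD_segment_neighbourhood[OF \<open>S \<in> SPD\<close> Sym_0] by blast
  show ?thesis
    using seg[OF \<open>t \<in> {0..1}\<close>, of 0] \<open>\<delta> > 0\<close> by simp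
qed

lemma SPD_line_neighbourhood:
  assumes "P \<in> SPD" and "u \<in> Sym"
  obtains e where "e > 0" and "\<And>r. \<bar>r\<bar> < e \<Longrightarrow> P + r *\<^sub>R u \<in> SPD"
proof -
  obtain \<delta> where "\<delta> > 0"
    and seg: "\<And>t r. t \<in> {0..1} \<Longrightarrow> \<bar>r\<bar> \<le> \<delta> \<Longrightarrow> P + t *\<^sub>R (mat 1 - P) + r *\<^sub>R u \<in> SPD"
    using SPD_segment_neighbourhood[OF assms] by blast
  show thesis
  proof (rule that[OF \<open>\<delta> > 0\<close>])
    fix r :: real assume "\<bar>r\<bar> < \<delta>"
    then show "P + r *\<^sub>R u \<in> SPD"
      using seg[of 0 r] by simp
  qed
qed

section \<open>Christoffel maps\<close>

lemma smooth_SPD_line_derivative: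
  assumes "smooth_SPD f" and "T \<in> SPD" and "u \<in> Sym"
  shows "((\<lambda>r. f (T + r *\<^sub>R u)) has_vector_derivative dd f T u) (at 0)"
proof -
  have "(\<lambda>r. f (T + r *\<^sub>R u)) differentiable (at 0)"
    using assms unfolding smooth_SPD_def by (metis empty_subsetI iter_dd.simps(1) list.set(1))
  then show ?thesis
    unfolding dd_def by (simp add: vector_derivative_works)
qed

lemma continuous_on_smooth_SPD: "smooth_SPD f \<Longrightarrow> continuous_on SPD f"
  unfolding smooth_SPD_def by (metis empty_subsetI iter_dd.simps(1) list.set(1))

lemma continuous_on_smooth_SPD_dd:
  assumes "smooth_SPD f" and "u \<in> Sym"
  shows "continuous_on SPD (\<lambda>T. dd f T u)"
proof -
  have "continuous_on SPD (iter_dd [u] f)"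
    using assms unfolding smooth_SPD_def by (metis empty_subsetI insert_subset list.set(1) list.simps(15))
  then show ?thesis
    by simp
qed

lemma has_vector_derivative_line_shift:
  fixes f :: "'a::real_normed_vector \<Rightarrow> 'b::real_normed_vector"
  assumes "((\<lambda>h. f ((x + r0 *\<^sub>R u) + h *\<^sub>R u)) has_vector_derivative D) (at 0)"
  shows "((\<lambda>r. f (x + r *\<^sub>R u)) has_vector_derivative D) (at r0)"
proof -
  have "((\<lambda>r. r - r0) has_vector_derivative 1) (at r0)"
    using has_vector_derivative_diff[OF has_vector_derivative_id has_vector_derivative_const] by simp
  from vector_diff_chain_at[OF this, of "\<lambda>h. f ((x + r0 *\<^sub>R u) + h *\<^sub>R u)"] assms
  have "(((\<lambda>h. f ((x + r0 *\<^sub>R u) + h *\<^sub>R u)) \<circ> (\<lambda>r. r - r0)) has_vector_derivative D) (at r0)"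
    by simp
  moreover have "x + r0 *\<^sub>R u + (r - r0) *\<^sub>R u = x + r *\<^sub>R u" for r
    by (simp add: scaleR_diff_left algebra_simps)
  ultimately show ?thesis
    by (simp add: o_def)
qed

text \<open>The Christoffel map \<open>\<Gamma> T\<close> is only specified on \<open>Sym\<close>; \<open>christoffel \<Gamma> T\<close> is its bilinear
  extension to all matrices (in coordinates, through \<open>sym_part\<close>), so that the tools for
  linear ODEs on the Euclidean space of matrices apply.\<close>

definition christoffel :: "('n::finite mat \<Rightarrow> 'n mat \<Rightarrow> 'n mat \<Rightarrow> 'n mat) \<Rightarrow> 'n mat \<Rightarrow> 'n mat \<Rightarrow> 'n mat \<Rightarrow> 'n mat"
  where "christoffel \<Gamma> T x y = (\<Sum>i\<in>Basis. \<Sum>j\<in>Basis. ((x \<bullet> i) * (y \<bullet> j)) *\<^sub>R \<Gamma> T (sym_part i) (sym_part j))"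

definition christoffel_deriv ::
    "('n::finite mat \<Rightarrow> 'n mat \<Rightarrow> 'n mat \<Rightarrow> 'n mat) \<Rightarrow> 'n mat \<Rightarrow> 'n mat \<Rightarrow> 'n mat \<Rightarrow> 'n mat \<Rightarrow> 'n mat"
  where "christoffel_deriv \<Gamma> T u x y =
    (\<Sum>i\<in>Basis. \<Sum>j\<in>Basis. ((x \<bullet> i) * (y \<bullet> j)) *\<^sub>R dd (\<lambda>T. \<Gamma> T (sym_part i) (sym_part j)) T u)"

lemma bilinear_Basis_sum:
  fixes F :: "'a::euclidean_space \<Rightarrow> 'a \<Rightarrow> 'b::real_vector"
  shows "bilinear (\<lambda>x y. \<Sum>i\<in>Basis. \<Sum>j\<in>Basis. ((x \<bullet> i) * (y \<bullet> j)) *\<^sub>R F i j)"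
  unfolding bilinear_def
  by (intro conjI allI linear_compose_sum ballI)
    (simp_all add: linear_iff inner_add_left inner_add_right algebra_simps scaleR_add_left)

lemma bilinear_christoffel: "bilinear (christoffel \<Gamma> T)"
  unfolding christoffel_def[abs_def] by (rule bilinear_Basis_sum)

lemma bilinear_christoffel_deriv: "bilinear (christoffel_deriv \<Gamma> T u)"
  unfolding christoffel_deriv_def[abs_def] by (rule bilinear_Basis_sum)

lemma linear_christoffel: "linear (christoffel \<Gamma> T x)"
  using bilinear_christoffel unfolding bilinear_def by blast

lemma linear_christoffel_deriv: "linear (christoffel_deriv \<Gamma> T u x)"
  using bilinear_christoffel_deriv unfolding bilinear_def by blast

context
  fixes \<Gamma> :: "'n::finite mat \<Rightarrow> 'n mat \<Rightarrow> 'n mat \<Rightarrow> 'n mat"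
  assumes conn: "connection \<Gamma>"
begin

lemma christoffel_eq_sym_part:
  assumes T: "T \<in> SPD"
  shows "christoffel \<Gamma> T x y = \<Gamma> T (sym_part x) (sym_part y)"
proof -
  have B: "bilinear_on_Sym (\<Gamma> T)"
    using conn T by (simp add: connection_def)
  have "\<Gamma> T (sym_part x) (sym_part y) = \<Gamma> T (\<Sum>i\<in>Basis. (x \<bullet> i) *\<^sub>R sym_part i) (\<Sum>j\<in>Basis. (y \<bullet> j) *\<^sub>R sym_part j)"
    by (simp flip: linear_Basis_expansion[OF linear_sym_part])
  also have "\<dots> = (\<Sum>i\<in>Basis. (x \<bullet> i) *\<^sub>R \<Gamma> T (sym_part i) (\<Sum>j\<in>Basis. (y \<bullet> j) *\<^sub>R sym_part j))"
    by (rule bilinear_on_Sym_sum_left[OF B]) auto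
  also have "\<dots> = (\<Sum>i\<in>Basis. (x \<bullet> i) *\<^sub>R (\<Sum>j\<in>Basis. (y \<bullet> j) *\<^sub>R \<Gamma> T (sym_part i) (sym_part j)))"
    by (intro sum.cong refl arg_cong[where f="\<lambda>z. _ *\<^sub>R z"] bilinear_on_Sym_sum_right[OF B]) auto
  also have "\<dots> = christoffel \<Gamma> T x y"
    by (simp add: christoffel_def scaleR_sum_right)
  finally show ?thesis ..
qed

lemma christoffel_eq: "T \<in> SPD \<Longrightarrow> x \<in> Sym \<Longrightarrow> y \<in> Sym \<Longrightarrow> christoffel \<Gamma> T x y = \<Gamma> T x y"
  by (simp add: christoffel_eq_sym_part sym_part_id)

lemma christoffel_in_Sym: "T \<in> SPD \<Longrightarrow> christoffel \<Gamma> T x y \<in> Sym"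
  using conn by (simp add: christoffel_eq_sym_part connection_def)

lemma christoffel_transpose_right: "T \<in> SPD \<Longrightarrow> christoffel \<Gamma> T x (transpose y) = christoffel \<Gamma> T x y"
  by (simp add: christoffel_eq_sym_part)

lemma continuous_on_christoffel: "continuous_on SPD (\<lambda>T. christoffel \<Gamma> T x y)"
  using conn unfolding christoffel_def connection_def
  by (intro continuous_intros continuous_on_smooth_SPD) simp

lemma continuous_on_christoffel_deriv: "u \<in> Sym \<Longrightarrow> continuous_on SPD (\<lambda>T. christoffel_deriv \<Gamma> T u x y)"
  using conn unfolding christoffel_deriv_def connection_def
  by (intro continuous_intros continuous_on_smooth_SPD_dd) simp_all

lemma christoffel_line_derivative:
  assumes "T + r0 *\<^sub>R u \<in> SPD" and "u \<in> Sym"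
  shows "((\<lambda>r. christoffel \<Gamma> (T + r *\<^sub>R u) x y) has_vector_derivative
    christoffel_deriv \<Gamma> (T + r0 *\<^sub>R u) u x y) (at r0)"
proof (rule has_vector_derivative_line_shift)
  show "((\<lambda>h. christoffel \<Gamma> ((T + r0 *\<^sub>R u) + h *\<^sub>R u) x y) has_vector_derivative
      christoffel_deriv \<Gamma> (T + r0 *\<^sub>R u) u x y) (at 0)"
    unfolding christoffel_def christoffel_deriv_def using conn assms
    by (intro has_vector_derivative_sum bounded_linear.has_vector_derivative[OF bounded_linear_scaleR_right]
        smooth_SPD_line_derivative) (simp_all add: connection_def)
qed

lemma dd_eq_christoffel_deriv:
  assumes P: "P \<in> SPD" and "u \<in> Sym" "x \<in> Sym" "y \<in> Sym"
  shows "dd (\<lambda>T. \<Gamma> T x y) P u = christoffel_deriv \<Gamma> P u x y"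
proof -
  obtain e where "e > 0" and line: "\<And>r. \<bar>r\<bar> < e \<Longrightarrow> P + r *\<^sub>R u \<in> SPD"
    using SPD_line_neighbourhood[OF P \<open>u \<in> Sym\<close>] by blast
  have "((\<lambda>r. christoffel \<Gamma> (P + r *\<^sub>R u) x y) has_vector_derivative christoffel_deriv \<Gamma> P u x y) (at 0)"
    using christoffel_line_derivative[of P 0 u] P assms by simp
  then have "((\<lambda>r. \<Gamma> (P + r *\<^sub>R u) x y) has_vector_derivative christoffel_deriv \<Gamma> P u x y) (at 0 within UNIV)"
    by (rule has_vector_derivative_transform_within[OF _ \<open>e > 0\<close>])
      (use line assms in \<open>auto simp: christoffel_eq dist_real_def\<close>)
  moreover have "((\<lambda>r. \<Gamma> (P + r *\<^sub>R u) x y) has_vector_derivative dd (\<lambda>T. \<Gamma> T x y) P u) (at 0)"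
    using conn assms by (intro smooth_SPD_line_derivative) (simp_all add: connection_def)
  ultimately show ?thesis
    using vector_derivative_unique_at by auto
qed

end

lemma dd_const [simp]: "dd (\<lambda>T. c) x v = 0"
  unfolding dd_def by (rule vector_derivative_at) simp

lemma iter_dd_const: "iter_dd vs (\<lambda>T. c) = (if vs = [] then (\<lambda>T. c) else (\<lambda>T. 0))"
proof (induction vs)
  case (Cons v vs)
  then have "iter_dd vs (\<lambda>T. c) = (\<lambda>T. if vs = [] then c else 0)"
    by auto
  then show ?case
    by simp
qed simp

lemma vfield_const: "A \<in> Sym \<Longrightarrow> vfield (\<lambda>_. A)"
  unfolding vfield_def smooth_SPD_def by (auto simp: iter_dd_const continuous_on_const)

text \<open>Zero curvature tested on constant vector fields, whose Lie brackets vanish.\<close>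

lemma curvature_free_constant_fields:
  assumes conn: "connection \<Gamma>" and cf: "curvature_free \<Gamma>" and P: "P \<in> SPD"
    and A: "A \<in> Sym" and B: "B \<in> Sym" and C: "C \<in> Sym"
  shows "dd (\<lambda>T. \<Gamma> T B C) P A - dd (\<lambda>T. \<Gamma> T A C) P B + \<Gamma> P A (\<Gamma> P B C) - \<Gamma> P B (\<Gamma> P A C) = 0"
proof -
  have "cov \<Gamma> (\<lambda>_. A) (cov \<Gamma> (\<lambda>_. B) (\<lambda>_. C)) P - cov \<Gamma> (\<lambda>_. B) (cov \<Gamma> (\<lambda>_. A) (\<lambda>_. C)) P
      - cov \<Gamma> (lie (\<lambda>_. A) (\<lambda>_. B)) (\<lambda>_. C) P = 0"
    using cf P vfield_const[OF A] vfield_const[OF B] vfield_const[OF C]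
    unfolding curvature_free_def by blast
  moreover have "cov \<Gamma> (\<lambda>_. X) (\<lambda>_. C) = (\<lambda>T. \<Gamma> T X C)" for X
    by (simp add: cov_def fun_eq_iff)
  moreover have "cov \<Gamma> (\<lambda>_. 0) (\<lambda>_. C) P = 0"
    using conn P C by (simp add: cov_def connection_def bilinear_on_Sym_zero_left)
  ultimately show ?thesis
    by (simp add: cov_def lie_def algebra_simps)
qed

lemma christoffel_curvature_free:
  assumes conn: "connection \<Gamma>" and cf: "curvature_free \<Gamma>" and P: "P \<in> SPD"
    and A: "A \<in> Sym" and B: "B \<in> Sym" and C: "C \<in> Sym"
  shows "christoffel_deriv \<Gamma> P A B C = christoffel_deriv \<Gamma> P B A C
    - christoffel \<Gamma> P A (christoffel \<Gamma> P B C) + christoffel \<Gamma> P B (christoffel \<Gamma> P A C)"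
proof -
  have "\<Gamma> P B C \<in> Sym" "\<Gamma> P A C \<in> Sym"
    using conn P A B C by (auto simp: connection_def)
  then show ?thesis
    using curvature_free_constant_fields[OF conn cf P A B C] P A B C
    by (simp add: dd_eq_christoffel_deriv[OF conn] christoffel_eq[OF conn] algebra_simps)
qed

lemma has_vector_derivative_christoffel_segment:
  assumes conn: "connection \<Gamma>" and seg: "\<And>t. t \<in> {0..1} \<Longrightarrow> S + t *\<^sub>R A \<in> SPD" and "A \<in> Sym"
    and V: "(V has_vector_derivative V') (at t within {0..1})" and t: "t \<in> {0..1}"
  shows "((\<lambda>t. christoffel \<Gamma> (S + t *\<^sub>R A) x (V t)) has_vector_derivative
    christoffel_deriv \<Gamma> (S + t *\<^sub>R A) A x (V t) + christoffel \<Gamma> (S + t *\<^sub>R A) x V') (at t within {0..1})"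
proof -
  have "((\<lambda>t. \<Sum>j\<in>Basis. (V t \<bullet> j) *\<^sub>R christoffel \<Gamma> (S + t *\<^sub>R A) x j) has_vector_derivative
      (\<Sum>j\<in>Basis. (V t \<bullet> j) *\<^sub>R christoffel_deriv \<Gamma> (S + t *\<^sub>R A) A x j
        + (V' \<bullet> j) *\<^sub>R christoffel \<Gamma> (S + t *\<^sub>R A) x j)) (at t within {0..1})"
  proof (rule has_vector_derivative_sum)
    fix j :: "'a mat"
    have "((\<lambda>t. V t \<bullet> j) has_real_derivative V' \<bullet> j) (at t within {0..1})"
      unfolding has_real_derivative_iff_has_vector_derivative
      by (rule bounded_linear.has_vector_derivative[OF bounded_linear_inner_left V])
    moreover have "((\<lambda>t. christoffel \<Gamma> (S + t *\<^sub>R A) x j) has_vector_derivative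
        christoffel_deriv \<Gamma> (S + t *\<^sub>R A) A x j) (at t within {0..1})"
      by (rule has_vector_derivative_at_within[OF christoffel_line_derivative[OF conn seg[OF t] \<open>A \<in> Sym\<close>]])
    ultimately show "((\<lambda>t. (V t \<bullet> j) *\<^sub>R christoffel \<Gamma> (S + t *\<^sub>R A) x j) has_vector_derivative
        (V t \<bullet> j) *\<^sub>R christoffel_deriv \<Gamma> (S + t *\<^sub>R A) A x j
          + (V' \<bullet> j) *\<^sub>R christoffel \<Gamma> (S + t *\<^sub>R A) x j) (at t within {0..1})"
      by (rule has_vector_derivative_scaleR)
  qed
  then show ?thesis
    by (simp add: sum.distrib linear_Basis_expansion[OF linear_christoffel, symmetric]
        linear_Basis_expansion[OF linear_christoffel_deriv, symmetric])
qed

section \<open>Parallel transport to the identity\<close>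

text \<open>The right-hand side of the transport equation in \<open>ptrans_to_id\<close>, with \<open>\<Gamma>\<close> replaced by its
  bilinear extension \<open>christoffel\<close>.\<close>

definition transport_coeff :: "('n::finite mat \<Rightarrow> 'n mat \<Rightarrow> 'n mat \<Rightarrow> 'n mat) \<Rightarrow> 'n mat \<Rightarrow> real \<Rightarrow> 'n mat \<Rightarrow> 'n mat"
  where "transport_coeff \<Gamma> S t X = - christoffel \<Gamma> (S + t *\<^sub>R (mat 1 - S)) (mat 1 - S) X"

lemma linear_transport_coeff: "linear (transport_coeff \<Gamma> S t)"
  unfolding transport_coeff_def[abs_def] by (rule linear_compose_neg[OF linear_christoffel])

context
  fixes \<Gamma> :: "'n::finite mat \<Rightarrow> 'n mat \<Rightarrow> 'n mat \<Rightarrow> 'n mat" and S :: "'n mat"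
  assumes conn: "connection \<Gamma>" and S: "S \<in> SPD"
begin

lemma continuous_on_transport_coeff: "continuous_on {0..1} (\<lambda>t. transport_coeff \<Gamma> S t X)"
  unfolding transport_coeff_def by (intro continuous_intros continuous_on_compose2[OF continuous_on_christoffel[OF conn]])
    (auto intro: SPD_segment[OF S])

lemma transport_solution_exists:
  obtains V where "V 0 = X0"
    and "\<And>t. t \<in> {0..1} \<Longrightarrow>
      (V has_vector_derivative transport_coeff \<Gamma> S t (V t)) (at t within {0..1})"
  using linear_ode_exists[OF linear_transport_coeff continuous_on_transport_coeff] by blast

lemma transport_solution_unique:
  assumes "\<And>t. t \<in> {0..1} \<Longrightarrow>
      (V has_vector_derivative transport_coeff \<Gamma> S t (V t)) (at t within {0..1})"
    and "\<And>t. t \<in> {0..1} \<Longrightarrow>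
      (W has_vector_derivative transport_coeff \<Gamma> S t (W t)) (at t within {0..1})"
    and "V 0 = W 0" and "t \<in> {0..1}"
  shows "V t = W t"
  using linear_ode_unique[OF linear_transport_coeff continuous_on_transport_coeff] assms by blast

context
  fixes V :: "real \<Rightarrow> 'n mat"
  assumes V0: "V 0 \<in> Sym"
    and V: "\<And>t. t \<in> {0..1} \<Longrightarrow>
      (V has_vector_derivative transport_coeff \<Gamma> S t (V t)) (at t within {0..1})"
begin

text \<open>The transport equation commutes with transposition, so it preserves symmetry.\<close>

lemma transport_solution_Sym:
  assumes t: "t \<in> {0..1}"
  shows "V t \<in> Sym"
proof -
  have "transpose (V t) = V t"
  proof (rule transport_solution_unique[OF _ V _ t])
    fix t :: real assume t: "t \<in> {0..1}"
    have "((\<lambda>t. transpose (V t)) has_vector_derivative transpose (transport_coeff \<Gamma> S t (V t))) (at t within {0..1})"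
      by (rule bounded_linear.has_vector_derivative[OF bounded_linear_transpose V[OF t]])
    then show "((\<lambda>t. transpose (V t)) has_vector_derivative transport_coeff \<Gamma> S t (transpose (V t))) (at t within {0..1})"
      using christoffel_in_Sym[OF conn SPD_segment[OF S t]] christoffel_transpose_right[OF conn SPD_segment[OF S t]]
      by (simp add: transport_coeff_def transpose_uminus Sym_def)
  next
    show "transpose (V 0) = V 0"
      using V0 by (simp add: Sym_def)
  qed
  then show ?thesis
    by (simp add: Sym_def)
qed

lemma ptrans_to_id_eq: "ptrans_to_id \<Gamma> S (V 0) = V 1"
  unfolding ptrans_to_id_def
proof (rule the_equality)
  have "transport_coeff \<Gamma> S t (V t) = - \<Gamma> (S + t *\<^sub>R (mat 1 - S)) (mat 1 - S) (V t)"
    if "t \<in> {0..1}" for t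
    unfolding transport_coeff_def using that SPD_imp_Sym[OF S]
    by (subst christoffel_eq[OF conn SPD_segment[OF S]]) (auto intro: transport_solution_Sym)
  then show "\<exists>V'. V' 0 = V 0 \<and> V' 1 = V 1 \<and> (\<forall>t\<in>{0..1}. V' t \<in> Sym \<and>
      (V' has_vector_derivative - \<Gamma> (S + t *\<^sub>R (mat 1 - S)) (mat 1 - S) (V' t)) (at t within {0..1}))"
    using V transport_solution_Sym by (intro exI[of _ V]) auto
next
  fix W assume "\<exists>V'. V' 0 = V 0 \<and> V' 1 = W \<and> (\<forall>t\<in>{0..1}. V' t \<in> Sym \<and>
      (V' has_vector_derivative - \<Gamma> (S + t *\<^sub>R (mat 1 - S)) (mat 1 - S) (V' t)) (at t within {0..1}))"
  then obtain V' where V': "V' 0 = V 0" "V' 1 = W" "\<And>t. t \<in> {0..1} \<Longrightarrow> V' t \<in> Sym"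
    "\<And>t. t \<in> {0..1} \<Longrightarrow> (V' has_vector_derivative - \<Gamma> (S + t *\<^sub>R (mat 1 - S)) (mat 1 - S) (V' t)) (at t within {0..1})"
    by blast
  have "V' 1 = V 1"
  proof (rule transport_solution_unique[OF _ V])
    fix t :: real assume t: "t \<in> {0..1}"
    then show "(V' has_vector_derivative transport_coeff \<Gamma> S t (V' t)) (at t within {0..1})"
      using V'(3,4)[OF t] SPD_imp_Sym[OF S]
      by (simp add: transport_coeff_def christoffel_eq[OF conn SPD_segment[OF S t]] Sym_diff)
  qed (use V' in auto)
  then show "W = V 1"
    using V'(2) by simp
qed

end

end

lemma transport_family_exists:
  assumes conn: "connection \<Gamma>" and P: "\<And>s. A s \<Longrightarrow> P s \<in> SPD"
  obtains U where "\<And>s. U s 0 = W s"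
    and "\<And>s t. A s \<Longrightarrow> t \<in> {0..1} \<Longrightarrow>
      (U s has_vector_derivative transport_coeff \<Gamma> (P s) t (U s t)) (at t within {0..1})"
proof -
  have "\<forall>s. \<exists>V. V 0 = W s \<and> (A s \<longrightarrow>
      (\<forall>t\<in>{0..1}. (V has_vector_derivative transport_coeff \<Gamma> (P s) t (V t)) (at t within {0..1})))"
  proof
    fix s
    show "\<exists>V. V 0 = W s \<and> (A s \<longrightarrow>
      (\<forall>t\<in>{0..1}. (V has_vector_derivative transport_coeff \<Gamma> (P s) t (V t)) (at t within {0..1})))"
    proof (cases "A s")
      case True
      obtain V where "V 0 = W s"
        and "\<And>t. t \<in> {0..1} \<Longrightarrow> (V has_vector_derivative transport_coeff \<Gamma> (P s) t (V t)) (at t within {0..1})"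
        by (rule transport_solution_exists[OF conn P[OF True], of "W s"]) blast
      then show ?thesis by blast
    qed (intro exI[of _ "\<lambda>_. W s"], simp)
  qed
  from choice[OF this] obtain U where "\<forall>s. U s 0 = W s \<and> (A s \<longrightarrow>
      (\<forall>t\<in>{0..1}. (U s has_vector_derivative transport_coeff \<Gamma> (P s) t (U s t)) (at t within {0..1})))"
    by blast
  then show thesis
    by (intro that[of U]) auto
qed

section \<open>Derivative of parallel transport in the base point\<close>

lemma uniformly_continuous_on_finite_family:
  assumes "finite I" and "\<And>i. i \<in> I \<Longrightarrow> uniformly_continuous_on K (f i)" and "e > 0"
  obtains d where "d > 0"
    and "\<And>i x x'. i \<in> I \<Longrightarrow> x \<in> K \<Longrightarrow> x' \<in> K \<Longrightarrow> dist x' x < d \<Longrightarrow> dist (f i x') (f i x) < e"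
  using assms(1,2)
proof (induction I arbitrary: thesis rule: finite_induct)
  case empty
  then show ?case by (meson zero_less_one empty_iff)
next
  case (insert j I)
  obtain d1 where d1: "d1 > 0"
    "\<And>i x x'. i \<in> I \<Longrightarrow> x \<in> K \<Longrightarrow> x' \<in> K \<Longrightarrow> dist x' x < d1 \<Longrightarrow> dist (f i x') (f i x) < e"
    using insert.IH insert.prems(2) by blast
  obtain d2 where d2: "d2 > 0" "\<And>x x'. x \<in> K \<Longrightarrow> x' \<in> K \<Longrightarrow> dist x' x < d2 \<Longrightarrow> dist (f j x') (f j x) < e"
    using insert.prems(2)[of j] \<open>e > 0\<close> unfolding uniformly_continuous_on_def by blast
  show ?case
    using d1 d2 by (intro insert.prems(1)[of "min d1 d2"]) auto
qed

lemma bilinear_family_bounded_on_compact: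
  fixes B :: "'x::metric_space \<Rightarrow> 'a::euclidean_space \<Rightarrow> 'b::euclidean_space \<Rightarrow> 'c::real_normed_vector"
  assumes "compact K" and "\<And>T. bilinear (B T)" and "\<And>i j. continuous_on K (\<lambda>T. B T i j)"
  obtains M where "M \<ge> 0" and "\<And>T x y. T \<in> K \<Longrightarrow> norm (B T x y) \<le> M * norm x * norm y"
proof -
  have "continuous_on K (\<lambda>T. \<Sum>i\<in>Basis. \<Sum>j\<in>Basis. norm (B T i j))"
    by (intro continuous_intros assms(3))
  then have "bounded ((\<lambda>T. \<Sum>i\<in>Basis. \<Sum>j\<in>Basis. norm (B T i j)) ` K)"
    by (intro compact_imp_bounded compact_continuous_image \<open>compact K\<close>)
  then obtain M where M: "\<And>T. T \<in> K \<Longrightarrow> norm (\<Sum>i\<in>Basis. \<Sum>j\<in>Basis. norm (B T i j)) \<le> M"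
    unfolding bounded_iff by blast
  show thesis
  proof (rule that)
    fix T x y assume "T \<in> K"
    show "norm (B T x y) \<le> \<bar>M\<bar> * norm x * norm y"
      using norm_bilinear_le_Basis[OF assms(2), of T x y] M[OF \<open>T \<in> K\<close>, unfolded real_norm_def]
      by (smt (verit) mult_right_mono norm_ge_zero zero_le_mult_iff)
  qed simp
qed

lemma line_remainder_le:
  fixes f f' :: "'a::real_normed_vector \<Rightarrow> 'b::real_normed_vector"
  assumes deriv: "\<And>r'. r' \<in> closed_segment 0 r \<Longrightarrow>
      ((\<lambda>r. f (P + r *\<^sub>R v)) has_vector_derivative f' (P + r' *\<^sub>R v)) (at r')"
    and bound: "\<And>r'. r' \<in> closed_segment 0 r \<Longrightarrow> norm (f' (P + r' *\<^sub>R v) - f' P) \<le> \<epsilon>"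
  shows "norm (f (P + r *\<^sub>R v) - f P - r *\<^sub>R f' P) \<le> \<epsilon> * \<bar>r\<bar>"
proof -
  define \<phi> where "\<phi> r' = f (P + r' *\<^sub>R v) - r' *\<^sub>R f' P" for r'
  have "norm (\<phi> r - \<phi> 0) \<le> \<epsilon> * norm (r - 0)"
  proof (rule differentiable_bound[where f' = "\<lambda>r' h. h *\<^sub>R (f' (P + r' *\<^sub>R v) - f' P)"])
    fix r' assume r': "r' \<in> closed_segment 0 r"
    have "(\<phi> has_vector_derivative f' (P + r' *\<^sub>R v) - f' P) (at r')"
      unfolding \<phi>_def
      using has_vector_derivative_diff[OF deriv[OF r'] has_vector_derivative_scaleR[OF DERIV_ident has_vector_derivative_const]]
      by simp
    then show "(\<phi> has_derivative (\<lambda>h. h *\<^sub>R (f' (P + r' *\<^sub>R v) - f' P))) (at r' within closed_segment 0 r)"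
      unfolding has_vector_derivative_def by (rule has_derivative_at_withinI)
    show "onorm (\<lambda>h. h *\<^sub>R (f' (P + r' *\<^sub>R v) - f' P)) \<le> \<epsilon>"
      using bound[OF r'] by (simp add: onorm_scaleR_left[OF bounded_linear_ident] onorm_id)
  qed auto
  then show ?thesis
    by (simp add: \<phi>_def algebra_simps)
qed

lemma bilinear_family_uniformly_continuous_on:
  fixes B :: "'x::metric_space \<Rightarrow> 'a::euclidean_space \<Rightarrow> 'b::euclidean_space \<Rightarrow> 'c::real_normed_vector"
  assumes "compact K" and bil: "\<And>T. bilinear (B T)" and cont: "\<And>i j. continuous_on K (\<lambda>T. B T i j)"
    and "e > 0"
  obtains d where "d > 0"
    and "\<And>T T' x y. T \<in> K \<Longrightarrow> T' \<in> K \<Longrightarrow> dist T' T < d \<Longrightarrow> norm (B T' x y - B T x y) \<le> e * norm x * norm y"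
proof -
  define N where "N = real (card (Basis :: 'a set) * card (Basis :: 'b set))"
  have "N \<ge> 0"
    by (simp add: N_def)
  then have "N * (e / (N + 1)) \<le> e"
    using \<open>e > 0\<close> by (simp add: field_simps)
  obtain d where "d > 0" and d: "\<And>p T T'. p \<in> Basis \<times> Basis \<Longrightarrow> T \<in> K \<Longrightarrow> T' \<in> K \<Longrightarrow> dist T' T < d \<Longrightarrow>
      dist (B T' (fst p) (snd p)) (B T (fst p) (snd p)) < e / (N + 1)"
    by (rule uniformly_continuous_on_finite_family[of "Basis \<times> Basis" K "\<lambda>p T. B T (fst p) (snd p)" "e / (N + 1)"])
      (use \<open>e > 0\<close> \<open>N \<ge> 0\<close> in \<open>auto intro: compact_uniformly_continuous cont \<open>compact K\<close>\<close>)
  show thesis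
  proof (rule that[OF \<open>d > 0\<close>])
    fix T T' x y assume "T \<in> K" "T' \<in> K" "dist T' T < d"
    have "norm (B T' x y - B T x y) \<le> (\<Sum>i\<in>Basis. \<Sum>j\<in>Basis. norm (B T' i j - B T i j)) * norm x * norm y"
      using norm_bilinear_le_Basis[of "\<lambda>x y. B T' x y - B T x y"] bil
      by (simp add: bilinear_def linear_compose_sub)
    also have "(\<Sum>i\<in>Basis. \<Sum>j\<in>Basis. norm (B T' i j - B T i j))
        \<le> (\<Sum>i\<in>(Basis::'a set). \<Sum>j\<in>(Basis::'b set). e / (N + 1))"
      using d[of "(i, j)" T T' for i j] \<open>T \<in> K\<close> \<open>T' \<in> K\<close> \<open>dist T' T < d\<close>
      by (intro sum_mono less_imp_le) (auto simp: dist_norm)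
    also have "\<dots> \<le> e"
      using \<open>N * (e / (N + 1)) \<le> e\<close> by (simp add: N_def)
    finally show "norm (B T' x y - B T x y) \<le> e * norm x * norm y"
      by (simp add: mult_right_mono)
  qed
qed

lemma bilinear_family_uniform_line_taylor:
  fixes B B' :: "'x::real_normed_vector \<Rightarrow> 'a::euclidean_space \<Rightarrow> 'b::euclidean_space \<Rightarrow> 'c::real_normed_vector"
  assumes "compact K" and bil': "\<And>T. bilinear (B' T)"
    and cont: "\<And>i j. continuous_on K (\<lambda>T. B' T i j)"
    and deriv: "\<And>P r x y. P + r *\<^sub>R v \<in> K \<Longrightarrow>
      ((\<lambda>r. B (P + r *\<^sub>R v) x y) has_vector_derivative B' (P + r *\<^sub>R v) x y) (at r)"
    and "e > 0"
  obtains \<eta> where "\<eta> > 0"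
    and "\<And>P r x y. (\<And>r'. r' \<in> closed_segment 0 r \<Longrightarrow> P + r' *\<^sub>R v \<in> K) \<Longrightarrow> \<bar>r\<bar> \<le> \<eta> \<Longrightarrow>
      norm (B (P + r *\<^sub>R v) x y - B P x y - r *\<^sub>R B' P x y) \<le> e * \<bar>r\<bar> * norm x * norm y"
proof -
  obtain d where "d > 0" and d: "\<And>T T' x y. T \<in> K \<Longrightarrow> T' \<in> K \<Longrightarrow> dist T' T < d \<Longrightarrow>
      norm (B' T' x y - B' T x y) \<le> e * norm x * norm y"
    by (rule bilinear_family_uniformly_continuous_on[OF \<open>compact K\<close> bil' cont \<open>e > 0\<close>]) blast
  have "0 < norm v + 1"
    using norm_ge_zero[of v] by linarith
  define \<eta> where "\<eta> = d / (norm v + 1)"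
  have "\<eta> > 0" "\<eta> * norm v < d"
    using \<open>d > 0\<close> \<open>0 < norm v + 1\<close> by (simp_all add: \<eta>_def field_simps)
  show thesis
  proof (rule that[OF \<open>\<eta> > 0\<close>])
    fix P r x y
    assume seg: "\<And>r'. r' \<in> closed_segment 0 r \<Longrightarrow> P + r' *\<^sub>R v \<in> K" and r: "\<bar>r\<bar> \<le> \<eta>"
    have "norm (B (P + r *\<^sub>R v) x y - B P x y - r *\<^sub>R B' P x y) \<le> (e * norm x * norm y) * \<bar>r\<bar>"
    proof (rule line_remainder_le)
      fix r' assume r': "r' \<in> closed_segment 0 r"
      show "((\<lambda>r. B (P + r *\<^sub>R v) x y) has_vector_derivative B' (P + r' *\<^sub>R v) x y) (at r')"
        by (rule deriv[OF seg[OF r']])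
      have "\<bar>r'\<bar> \<le> \<bar>r\<bar>"
        using r' by (auto simp: closed_segment_eq_real_ivl split: if_splits)
      then have "dist (P + r' *\<^sub>R v) P \<le> \<eta> * norm v"
        using r by (simp add: dist_norm mult_right_mono)
      then show "norm (B' (P + r' *\<^sub>R v) x y - B' P x y) \<le> e * norm x * norm y"
        using \<open>\<eta> * norm v < d\<close> seg[OF r'] seg[of 0] by (intro d) auto
    qed
    then show "norm (B (P + r *\<^sub>R v) x y - B P x y - r *\<^sub>R B' P x y) \<le> e * \<bar>r\<bar> * norm x * norm y"
      by (simp add: ac_simps)
  qed
qed

text \<open>The derivative of \<open>transport_coeff \<Gamma> (S + s v) t X\<close> with respect to \<open>s\<close> at \<open>s = 0\<close>.\<close>

definition transport_coeff_deriv ::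
    "('n::finite mat \<Rightarrow> 'n mat \<Rightarrow> 'n mat \<Rightarrow> 'n mat) \<Rightarrow> 'n mat \<Rightarrow> 'n mat \<Rightarrow> real \<Rightarrow> 'n mat \<Rightarrow> 'n mat"
  where "transport_coeff_deriv \<Gamma> S v t X = christoffel \<Gamma> (S + t *\<^sub>R (mat 1 - S)) v X
    - (1 - t) *\<^sub>R christoffel_deriv \<Gamma> (S + t *\<^sub>R (mat 1 - S)) v (mat 1 - S) X"

lemma linear_transport_coeff_deriv: "linear (transport_coeff_deriv \<Gamma> S v t)"
  unfolding transport_coeff_deriv_def[abs_def]
  by (intro linear_compose_sub linear_compose_scale_right linear_christoffel linear_christoffel_deriv)

lemma transport_coeff_shift:
  "transport_coeff \<Gamma> (S + s *\<^sub>R v) t X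
    = - christoffel \<Gamma> (S + t *\<^sub>R (mat 1 - S) + (s * (1 - t)) *\<^sub>R v) (mat 1 - S - s *\<^sub>R v) X"
proof -
  have "S + s *\<^sub>R v + t *\<^sub>R (mat 1 - (S + s *\<^sub>R v)) = S + t *\<^sub>R (mat 1 - S) + (s * (1 - t)) *\<^sub>R v"
    by (simp add: scaleR_diff_right scaleR_diff_left algebra_simps)
  then show ?thesis
    unfolding transport_coeff_def by (simp only: diff_diff_eq)
qed

lemma transport_coeff_remainder:
  "transport_coeff \<Gamma> (S + s *\<^sub>R v) t X - transport_coeff \<Gamma> S t X - s *\<^sub>R transport_coeff_deriv \<Gamma> S v t X
    = - (christoffel \<Gamma> (S + t *\<^sub>R (mat 1 - S) + (s * (1 - t)) *\<^sub>R v) (mat 1 - S) X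
          - christoffel \<Gamma> (S + t *\<^sub>R (mat 1 - S)) (mat 1 - S) X
          - (s * (1 - t)) *\<^sub>R christoffel_deriv \<Gamma> (S + t *\<^sub>R (mat 1 - S)) v (mat 1 - S) X)
      + s *\<^sub>R (christoffel \<Gamma> (S + t *\<^sub>R (mat 1 - S) + (s * (1 - t)) *\<^sub>R v) v X
          - christoffel \<Gamma> (S + t *\<^sub>R (mat 1 - S)) v X)"
proof -
  define P where "P = S + t *\<^sub>R (mat 1 - S)"
  define Q where "Q = P + (s * (1 - t)) *\<^sub>R v"
  show ?thesis
    unfolding transport_coeff_shift
    unfolding transport_coeff_def transport_coeff_deriv_def P_def[symmetric] Q_def[symmetric]
    by (simp only: bilinear_lsub[OF bilinear_christoffel] bilinear_lmul[OF bilinear_christoffel])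
      (simp add: scaleR_diff_right algebra_simps)
qed

context
  fixes \<Gamma> :: "'n::finite mat \<Rightarrow> 'n mat \<Rightarrow> 'n mat \<Rightarrow> 'n mat" and S v :: "'n mat"
  assumes conn: "connection \<Gamma>" and S: "S \<in> SPD" and v: "v \<in> Sym"
begin

lemma christoffel_tube:
  obtains \<delta> K where "\<delta> > 0" and "compact K" and "K \<subseteq> SPD"
    and "\<And>t r. t \<in> {0..1} \<Longrightarrow> \<bar>r\<bar> \<le> \<delta> \<Longrightarrow> S + t *\<^sub>R (mat 1 - S) + r *\<^sub>R v \<in> K"
proof -
  obtain \<delta> where "\<delta> > 0"
    and tube: "\<And>t r. t \<in> {0..1} \<Longrightarrow> \<bar>r\<bar> \<le> \<delta> \<Longrightarrow> S + t *\<^sub>R (mat 1 - S) + r *\<^sub>R v \<in> SPD"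
    using SPD_segment_neighbourhood[OF S v] by blast
  define K where "K = (\<lambda>(t, r). S + t *\<^sub>R (mat 1 - S) + r *\<^sub>R v) ` ({0..1} \<times> {-\<delta>..\<delta>})"
  show thesis
  proof (rule that[OF \<open>\<delta> > 0\<close>])
    show "compact K"
      unfolding K_def case_prod_unfold
      by (intro compact_continuous_image compact_Times compact_Icc continuous_intros)
    show "K \<subseteq> SPD"
      using tube by (auto simp: K_def)
    show "S + t *\<^sub>R (mat 1 - S) + r *\<^sub>R v \<in> K" if "t \<in> {0..1}" "\<bar>r\<bar> \<le> \<delta>" for t r
      using that unfolding K_def by (intro image_eqI[of _ _ "(t, r)"]) auto
  qed
qed

lemma christoffel_tube_bounds:
  obtains \<delta> M where "\<delta> > 0" and "M \<ge> 0"
    and "\<And>t r. t \<in> {0..1} \<Longrightarrow> \<bar>r\<bar> \<le> \<delta> \<Longrightarrow> S + t *\<^sub>R (mat 1 - S) + r *\<^sub>R v \<in> SPD"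
    and "\<And>t r x y. t \<in> {0..1} \<Longrightarrow> \<bar>r\<bar> \<le> \<delta> \<Longrightarrow>
      norm (christoffel \<Gamma> (S + t *\<^sub>R (mat 1 - S) + r *\<^sub>R v) x y) \<le> M * norm x * norm y"
    and "\<And>t r x y. t \<in> {0..1} \<Longrightarrow> \<bar>r\<bar> \<le> \<delta> \<Longrightarrow>
      norm (christoffel_deriv \<Gamma> (S + t *\<^sub>R (mat 1 - S) + r *\<^sub>R v) v x y) \<le> M * norm x * norm y"
proof -
  obtain \<delta> K where "\<delta> > 0" "compact K" and K_SPD: "K \<subseteq> SPD"
    and in_K: "\<And>t r. t \<in> {0..1} \<Longrightarrow> \<bar>r\<bar> \<le> \<delta> \<Longrightarrow> S + t *\<^sub>R (mat 1 - S) + r *\<^sub>R v \<in> K"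
    by (rule christoffel_tube) blast
  obtain M1 where "M1 \<ge> 0" and M1: "\<And>T x y. T \<in> K \<Longrightarrow> norm (christoffel \<Gamma> T x y) \<le> M1 * norm x * norm y"
    using bilinear_family_bounded_on_compact[OF \<open>compact K\<close> bilinear_christoffel
        continuous_on_subset[OF continuous_on_christoffel[OF conn] K_SPD]] by blast
  obtain M2 where "M2 \<ge> 0" and M2: "\<And>T x y. T \<in> K \<Longrightarrow> norm (christoffel_deriv \<Gamma> T v x y) \<le> M2 * norm x * norm y"
    using bilinear_family_bounded_on_compact[OF \<open>compact K\<close> bilinear_christoffel_deriv
        continuous_on_subset[OF continuous_on_christoffel_deriv[OF conn v] K_SPD]] by blast
  show thesis
  proof (rule that[of \<delta> "max M1 M2"])
    fix t r :: real and x y :: "'n mat"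
    assume t: "t \<in> {0..1}" and r: "\<bar>r\<bar> \<le> \<delta>"
    show "S + t *\<^sub>R (mat 1 - S) + r *\<^sub>R v \<in> SPD"
      using in_K[OF t r] K_SPD by blast
    show "norm (christoffel \<Gamma> (S + t *\<^sub>R (mat 1 - S) + r *\<^sub>R v) x y) \<le> max M1 M2 * norm x * norm y"
      by (rule order_trans[OF M1[OF in_K[OF t r]]]) (intro mult_right_mono; simp)
    show "norm (christoffel_deriv \<Gamma> (S + t *\<^sub>R (mat 1 - S) + r *\<^sub>R v) v x y) \<le> max M1 M2 * norm x * norm y"
      by (rule order_trans[OF M2[OF in_K[OF t r]]]) (intro mult_right_mono; simp)
  qed (use \<open>\<delta> > 0\<close> \<open>M1 \<ge> 0\<close> in auto)
qed

lemma christoffel_tube_taylor: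
  assumes "e > 0"
  obtains \<eta> where "\<eta> > 0"
    and "\<And>t r x y. t \<in> {0..1} \<Longrightarrow> \<bar>r\<bar> \<le> \<eta> \<Longrightarrow>
      norm (christoffel \<Gamma> (S + t *\<^sub>R (mat 1 - S) + r *\<^sub>R v) x y - christoffel \<Gamma> (S + t *\<^sub>R (mat 1 - S)) x y
        - r *\<^sub>R christoffel_deriv \<Gamma> (S + t *\<^sub>R (mat 1 - S)) v x y) \<le> e * \<bar>r\<bar> * norm x * norm y"
proof -
  obtain \<delta> K where "\<delta> > 0" "compact K" and K_SPD: "K \<subseteq> SPD"
    and in_K: "\<And>t r. t \<in> {0..1} \<Longrightarrow> \<bar>r\<bar> \<le> \<delta> \<Longrightarrow> S + t *\<^sub>R (mat 1 - S) + r *\<^sub>R v \<in> K"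
    by (rule christoffel_tube) blast
  obtain \<eta> where "\<eta> > 0" and taylor: "\<And>P r x y. (\<And>r'. r' \<in> closed_segment 0 r \<Longrightarrow> P + r' *\<^sub>R v \<in> K) \<Longrightarrow>
      \<bar>r\<bar> \<le> \<eta> \<Longrightarrow> norm (christoffel \<Gamma> (P + r *\<^sub>R v) x y - christoffel \<Gamma> P x y
        - r *\<^sub>R christoffel_deriv \<Gamma> P v x y) \<le> e * \<bar>r\<bar> * norm x * norm y"
  proof (rule bilinear_family_uniform_line_taylor[OF \<open>compact K\<close> bilinear_christoffel_deriv
        continuous_on_subset[OF continuous_on_christoffel_deriv[OF conn v] K_SPD] _ \<open>e > 0\<close>])
    fix P x y :: "'n mat" and r :: real
    assume "P + r *\<^sub>R v \<in> K"
    then show "((\<lambda>r. christoffel \<Gamma> (P + r *\<^sub>R v) x y) has_vector_derivative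
        christoffel_deriv \<Gamma> (P + r *\<^sub>R v) v x y) (at r)"
      using K_SPD v by (intro christoffel_line_derivative[OF conn]) auto
  qed blast
  show thesis
  proof (rule that[of "min \<eta> \<delta>"])
    show "min \<eta> \<delta> > 0" using \<open>\<eta> > 0\<close> \<open>\<delta> > 0\<close> by simp
    fix t r :: real and x y :: "'n mat"
    assume t: "t \<in> {0..1}" and r: "\<bar>r\<bar> \<le> min \<eta> \<delta>"
    have "S + t *\<^sub>R (mat 1 - S) + r' *\<^sub>R v \<in> K" if "r' \<in> closed_segment 0 r" for r'
      using that r by (intro in_K[OF t]) (auto simp: closed_segment_eq_real_ivl split: if_splits)
    then show "norm (christoffel \<Gamma> (S + t *\<^sub>R (mat 1 - S) + r *\<^sub>R v) x y - christoffel \<Gamma> (S + t *\<^sub>R (mat 1 - S)) x y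
        - r *\<^sub>R christoffel_deriv \<Gamma> (S + t *\<^sub>R (mat 1 - S)) v x y) \<le> e * \<bar>r\<bar> * norm x * norm y"
      using r by (intro taylor) auto
  qed
qed

lemma christoffel_tube_lipschitz:
  obtains \<eta> L where "\<eta> > 0" and "L \<ge> 0"
    and "\<And>t r x y. t \<in> {0..1} \<Longrightarrow> \<bar>r\<bar> \<le> \<eta> \<Longrightarrow>
      norm (christoffel \<Gamma> (S + t *\<^sub>R (mat 1 - S) + r *\<^sub>R v) x y - christoffel \<Gamma> (S + t *\<^sub>R (mat 1 - S)) x y)
        \<le> L * \<bar>r\<bar> * norm x * norm y"
proof -
  let ?P = "\<lambda>t. S + t *\<^sub>R (mat 1 - S)"
  obtain \<delta> M where "\<delta> > 0" "M \<ge> 0"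
    and dG: "\<And>t r x y. t \<in> {0..1} \<Longrightarrow> \<bar>r\<bar> \<le> \<delta> \<Longrightarrow>
      norm (christoffel_deriv \<Gamma> (?P t + r *\<^sub>R v) v x y) \<le> M * norm x * norm y"
    by (rule christoffel_tube_bounds) blast
  obtain \<eta> where "\<eta> > 0" and \<eta>: "\<And>t r x y. t \<in> {0..1} \<Longrightarrow> \<bar>r\<bar> \<le> \<eta> \<Longrightarrow>
      norm (christoffel \<Gamma> (?P t + r *\<^sub>R v) x y - christoffel \<Gamma> (?P t) x y
        - r *\<^sub>R christoffel_deriv \<Gamma> (?P t) v x y) \<le> 1 * \<bar>r\<bar> * norm x * norm y"
    by (rule christoffel_tube_taylor[OF zero_less_one]) blast
  show thesis
  proof (rule that[OF \<open>\<eta> > 0\<close>])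
    show "1 + M \<ge> 0" using \<open>M \<ge> 0\<close> by simp
    fix t r :: real and x y :: "'n mat" assume t: "t \<in> {0..1}" and r: "\<bar>r\<bar> \<le> \<eta>"
    have "norm (christoffel \<Gamma> (?P t + r *\<^sub>R v) x y - christoffel \<Gamma> (?P t) x y)
        \<le> norm (r *\<^sub>R christoffel_deriv \<Gamma> (?P t) v x y) + norm (christoffel \<Gamma> (?P t + r *\<^sub>R v) x y
          - christoffel \<Gamma> (?P t) x y - r *\<^sub>R christoffel_deriv \<Gamma> (?P t) v x y)"
      by (rule norm_triangle_sub)
    also have "\<dots> \<le> \<bar>r\<bar> * (M * norm x * norm y) + 1 * \<bar>r\<bar> * norm x * norm y"
    proof (rule add_mono)
      show "norm (r *\<^sub>R christoffel_deriv \<Gamma> (?P t) v x y) \<le> \<bar>r\<bar> * (M * norm x * norm y)"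
        using dG[OF t, of 0 x y] \<open>\<delta> > 0\<close> by (simp add: mult_left_mono)
    qed (rule \<eta>[OF t r])
    finally show "norm (christoffel \<Gamma> (?P t + r *\<^sub>R v) x y - christoffel \<Gamma> (?P t) x y)
        \<le> (1 + M) * \<bar>r\<bar> * norm x * norm y"
      by (simp add: algebra_simps)
  qed
qed

lemma transport_coeff_param_deriv:
  assumes "e > 0"
  shows "\<exists>\<eta>>0. \<forall>s t x. \<bar>s\<bar> \<le> \<eta> \<longrightarrow> t \<in> {0..1} \<longrightarrow>
    norm (transport_coeff \<Gamma> (S + s *\<^sub>R v) t x - transport_coeff \<Gamma> S t x - s *\<^sub>R transport_coeff_deriv \<Gamma> S v t x)
      \<le> e * \<bar>s\<bar> * norm x"
proof -
  let ?A = "mat 1 - S" and ?P = "\<lambda>t. S + t *\<^sub>R (mat 1 - S)"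
  define e1 where "e1 = e / (2 * (norm ?A + 1))"
  have "norm ?A + 1 > 0"
    using norm_ge_zero[of ?A] by linarith
  then have e1: "e1 > 0" "e1 * norm ?A \<le> e / 2"
    using \<open>e > 0\<close> by (simp_all add: e1_def field_simps)
  obtain \<eta>1 where "\<eta>1 > 0" and taylor: "\<And>t r x y. t \<in> {0..1} \<Longrightarrow> \<bar>r\<bar> \<le> \<eta>1 \<Longrightarrow>
      norm (christoffel \<Gamma> (?P t + r *\<^sub>R v) x y - christoffel \<Gamma> (?P t) x y
        - r *\<^sub>R christoffel_deriv \<Gamma> (?P t) v x y) \<le> e1 * \<bar>r\<bar> * norm x * norm y"
    by (rule christoffel_tube_taylor[OF e1(1)]) blast
  obtain \<eta>2 L where "\<eta>2 > 0" "L \<ge> 0" and lip: "\<And>t r x y. t \<in> {0..1} \<Longrightarrow> \<bar>r\<bar> \<le> \<eta>2 \<Longrightarrow>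
      norm (christoffel \<Gamma> (?P t + r *\<^sub>R v) x y - christoffel \<Gamma> (?P t) x y) \<le> L * \<bar>r\<bar> * norm x * norm y"
    by (rule christoffel_tube_lipschitz) blast
  define \<eta> where "\<eta> = min (min \<eta>1 \<eta>2) (e / (2 * (L * norm v + 1)))"
  show ?thesis
  proof (intro exI[of _ \<eta>] conjI allI impI)
    show "\<eta> > 0" using \<open>\<eta>1 > 0\<close> \<open>\<eta>2 > 0\<close> \<open>e > 0\<close> \<open>L \<ge> 0\<close> by (simp add: \<eta>_def add_nonneg_pos)
    fix s t :: real and x :: "'n mat" assume s: "\<bar>s\<bar> \<le> \<eta>" and t: "t \<in> {0..1}"
    define r where "r = s * (1 - t)"
    have "\<bar>r\<bar> \<le> \<bar>s\<bar>"
      using t by (simp add: r_def abs_mult mult_left_le)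
    then have r: "\<bar>r\<bar> \<le> \<bar>s\<bar>" "\<bar>r\<bar> \<le> \<eta>1" "\<bar>r\<bar> \<le> \<eta>2"
      using s by (auto simp: \<eta>_def)
    have "norm (christoffel \<Gamma> (?P t + r *\<^sub>R v) v x - christoffel \<Gamma> (?P t) v x) \<le> L * \<bar>r\<bar> * norm v * norm x"
      by (rule lip[OF t r(3)])
    also have "\<dots> \<le> \<bar>s\<bar> * (L * norm v) * norm x"
      using r(1) \<open>L \<ge> 0\<close> by (simp add: mult_right_mono mult_left_mono ac_simps)
    finally have second: "norm (s *\<^sub>R (christoffel \<Gamma> (?P t + r *\<^sub>R v) v x - christoffel \<Gamma> (?P t) v x))
        \<le> \<bar>s\<bar> * (\<bar>s\<bar> * (L * norm v) * norm x)"
      by (simp add: mult_left_mono)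
    have first: "norm (christoffel \<Gamma> (?P t + r *\<^sub>R v) ?A x - christoffel \<Gamma> (?P t) ?A x
        - r *\<^sub>R christoffel_deriv \<Gamma> (?P t) v ?A x) \<le> e1 * \<bar>s\<bar> * norm ?A * norm x"
    proof (rule order_trans[OF taylor[OF t r(2)]])
      show "e1 * \<bar>r\<bar> * norm ?A * norm x \<le> e1 * \<bar>s\<bar> * norm ?A * norm x"
        using r(1) e1 by (intro mult_right_mono mult_left_mono) auto
    qed
    have "norm (transport_coeff \<Gamma> (S + s *\<^sub>R v) t x - transport_coeff \<Gamma> S t x - s *\<^sub>R transport_coeff_deriv \<Gamma> S v t x)
        \<le> e1 * \<bar>s\<bar> * norm ?A * norm x + \<bar>s\<bar> * (\<bar>s\<bar> * (L * norm v) * norm x)"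
      unfolding transport_coeff_remainder r_def[symmetric]
      by (rule order_trans[OF norm_triangle_ineq add_mono]) (simp only: norm_minus_cancel first second)+
    also have "\<dots> \<le> e / 2 * \<bar>s\<bar> * norm x + e / 2 * \<bar>s\<bar> * norm x"
    proof (rule add_mono)
      show "e1 * \<bar>s\<bar> * norm ?A * norm x \<le> e / 2 * \<bar>s\<bar> * norm x"
        using mult_right_mono[OF e1(2), of "\<bar>s\<bar> * norm x"] by (simp add: ac_simps)
      have "\<bar>s\<bar> * (2 * (L * norm v + 1)) \<le> e"
        using s \<open>L \<ge> 0\<close> by (simp add: \<eta>_def pos_le_divide_eq add_nonneg_pos)
      then have "\<bar>s\<bar> * (L * norm v) \<le> e / 2"
        by (simp add: algebra_simps)
      from mult_right_mono[OF this, of "\<bar>s\<bar> * norm x"]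
      show "\<bar>s\<bar> * (\<bar>s\<bar> * (L * norm v) * norm x) \<le> e / 2 * \<bar>s\<bar> * norm x"
        by (simp add: ac_simps)
    qed
    finally show "norm (transport_coeff \<Gamma> (S + s *\<^sub>R v) t x - transport_coeff \<Gamma> S t x
        - s *\<^sub>R transport_coeff_deriv \<Gamma> S v t x) \<le> e * \<bar>s\<bar> * norm x"
      by simp
  qed
qed

lemma transport_linear_ode_family:
  obtains \<delta> M where "\<delta> > 0" and "\<And>s. \<bar>s\<bar> \<le> \<delta> \<Longrightarrow> S + s *\<^sub>R v \<in> SPD"
    and "linear_ode_family (\<lambda>s. transport_coeff \<Gamma> (S + s *\<^sub>R v)) (transport_coeff_deriv \<Gamma> S v) \<delta> M"
proof -
  let ?A = "mat 1 - S" and ?P = "\<lambda>t. S + t *\<^sub>R (mat 1 - S)"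
  obtain \<delta> M0 where "\<delta> > 0" "M0 \<ge> 0"
    and tube: "\<And>t r. t \<in> {0..1} \<Longrightarrow> \<bar>r\<bar> \<le> \<delta> \<Longrightarrow> ?P t + r *\<^sub>R v \<in> SPD"
    and G: "\<And>t r x y. t \<in> {0..1} \<Longrightarrow> \<bar>r\<bar> \<le> \<delta> \<Longrightarrow>
      norm (christoffel \<Gamma> (?P t + r *\<^sub>R v) x y) \<le> M0 * norm x * norm y"
    and dG: "\<And>t r x y. t \<in> {0..1} \<Longrightarrow> \<bar>r\<bar> \<le> \<delta> \<Longrightarrow>
      norm (christoffel_deriv \<Gamma> (?P t + r *\<^sub>R v) v x y) \<le> M0 * norm x * norm y"
    by (rule christoffel_tube_bounds) blast
  define M where "M = M0 * (norm ?A + \<delta> * norm v + norm v)"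
  have M: "M \<ge> 0"
    using \<open>M0 \<ge> 0\<close> \<open>\<delta> > 0\<close> by (simp add: M_def)
  have norm_a: "norm (transport_coeff \<Gamma> (S + s *\<^sub>R v) t x) \<le> M * norm x"
    if s: "\<bar>s\<bar> \<le> \<delta>" and t: "t \<in> {0..1}" for s t x
  proof -
    have "\<bar>s * (1 - t)\<bar> \<le> \<bar>s\<bar>"
      using t by (simp add: abs_mult mult_left_le)
    then have "\<bar>s * (1 - t)\<bar> \<le> \<delta>"
      using s by linarith
    then have "norm (transport_coeff \<Gamma> (S + s *\<^sub>R v) t x) \<le> M0 * norm (?A - s *\<^sub>R v) * norm x"
      unfolding transport_coeff_shift norm_minus_cancel by (rule G[OF t])
    also have "\<dots> \<le> M0 * (norm ?A + \<delta> * norm v) * norm x"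
      using s \<open>M0 \<ge> 0\<close> norm_triangle_ineq4[of ?A "s *\<^sub>R v"] mult_right_mono[OF s, of "norm v"]
      by (intro mult_right_mono mult_left_mono) auto
    also have "\<dots> \<le> M * norm x"
      using \<open>M0 \<ge> 0\<close> by (intro mult_right_mono) (simp_all add: M_def mult_left_mono)
    finally show ?thesis .
  qed
  have norm_b: "norm (transport_coeff_deriv \<Gamma> S v t x) \<le> M * norm x" if t: "t \<in> {0..1}" for t x
  proof -
    have "norm (transport_coeff_deriv \<Gamma> S v t x)
        \<le> norm (christoffel \<Gamma> (?P t) v x) + \<bar>1 - t\<bar> * norm (christoffel_deriv \<Gamma> (?P t) v ?A x)"
      unfolding transport_coeff_deriv_def by (rule order_trans[OF norm_triangle_ineq4]) simp
    also have "\<dots> \<le> M0 * norm v * norm x + 1 * (M0 * norm ?A * norm x)"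
      using G[OF t, of 0 v x] dG[OF t, of 0 ?A x] t \<open>\<delta> > 0\<close>
      by (intro add_mono mult_mono) auto
    also have "\<dots> = M0 * (norm v + norm ?A) * norm x"
      by (simp add: algebra_simps)
    also have "\<dots> \<le> M * norm x"
      using \<open>M0 \<ge> 0\<close> \<open>\<delta> > 0\<close> by (intro mult_right_mono) (simp_all add: M_def mult_left_mono)
    finally show ?thesis .
  qed
  show thesis
  proof (rule that[OF \<open>\<delta> > 0\<close>])
    show "S + s *\<^sub>R v \<in> SPD" if "\<bar>s\<bar> \<le> \<delta>" for s
      using tube[of 0 s] that by simp
    show "linear_ode_family (\<lambda>s. transport_coeff \<Gamma> (S + s *\<^sub>R v)) (transport_coeff_deriv \<Gamma> S v) \<delta> M"
      by (rule linear_ode_family.intro)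
        (use \<open>\<delta> > 0\<close> M norm_a norm_b transport_coeff_param_deriv in
          \<open>auto intro: linear_transport_coeff linear_transport_coeff_deriv\<close>)
  qed
qed

text \<open>Zero curvature is what makes this combination of two transports from \<open>S\<close> solve the
  linearisation, in the base point, of the transport equation.\<close>

lemma transport_variation:
  assumes cf: "curvature_free \<Gamma>"
    and U0: "U 0 \<in> Sym"
    and U: "\<And>t. t \<in> {0..1} \<Longrightarrow> (U has_vector_derivative transport_coeff \<Gamma> S t (U t)) (at t within {0..1})"
    and J: "\<And>t. t \<in> {0..1} \<Longrightarrow> (J has_vector_derivative transport_coeff \<Gamma> S t (J t)) (at t within {0..1})"
    and t: "t \<in> {0..1}"
  defines "D \<equiv> \<lambda>t. J t - (1 - t) *\<^sub>R christoffel \<Gamma> (S + t *\<^sub>R (mat 1 - S)) v (U t)"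
  shows "(D has_vector_derivative transport_coeff \<Gamma> S t (D t) + transport_coeff_deriv \<Gamma> S v t (U t))
    (at t within {0..1})"
proof -
  let ?A = "mat 1 - S" and ?P = "S + t *\<^sub>R (mat 1 - S)"
  have A: "?A \<in> Sym"
    using SPD_imp_Sym[OF S] by auto
  have deriv: "(D has_vector_derivative transport_coeff \<Gamma> S t (J t)
      - ((1 - t) *\<^sub>R (christoffel_deriv \<Gamma> ?P ?A v (U t) + christoffel \<Gamma> ?P v (transport_coeff \<Gamma> S t (U t)))
        + (- 1) *\<^sub>R christoffel \<Gamma> ?P v (U t))) (at t within {0..1})"
    unfolding D_def
    using DERIV_diff[OF DERIV_const DERIV_ident, of 1 t "{0..1}"]
    by (intro has_vector_derivative_diff J t has_vector_derivative_scaleR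
        has_vector_derivative_christoffel_segment[OF conn SPD_segment[OF S] A U]) simp
  define P where "P = ?P"
  have curv: "christoffel_deriv \<Gamma> P ?A v (U t) = christoffel_deriv \<Gamma> P v ?A (U t)
      - christoffel \<Gamma> P ?A (christoffel \<Gamma> P v (U t)) + christoffel \<Gamma> P v (christoffel \<Gamma> P ?A (U t))"
    unfolding P_def
    by (rule christoffel_curvature_free[OF conn cf SPD_segment[OF S t] A v transport_solution_Sym[OF conn S U0 U t]])
  have "transport_coeff \<Gamma> S t (J t)
      - ((1 - t) *\<^sub>R (christoffel_deriv \<Gamma> ?P ?A v (U t) + christoffel \<Gamma> ?P v (transport_coeff \<Gamma> S t (U t)))
        + (- 1) *\<^sub>R christoffel \<Gamma> ?P v (U t))
      = transport_coeff \<Gamma> S t (D t) + transport_coeff_deriv \<Gamma> S v t (U t)"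
    unfolding D_def transport_coeff_def transport_coeff_deriv_def
    unfolding P_def[symmetric]
    unfolding curv
    by (simp only: bilinear_rsub[OF bilinear_christoffel] bilinear_rmul[OF bilinear_christoffel]
        bilinear_rneg[OF bilinear_christoffel] bilinear_radd[OF bilinear_christoffel])
      (simp add: algebra_simps)
  with deriv show ?thesis
    by simp
qed

lemma ptrans_to_id_has_vector_derivative:
  assumes cf: "curvature_free \<Gamma>"
    and "\<delta>0 > 0" and w_Sym: "\<And>s. \<bar>s\<bar> < \<delta>0 \<Longrightarrow> w s \<in> Sym" and w': "(w has_vector_derivative w') (at 0)"
  shows "((\<lambda>s. ptrans_to_id \<Gamma> (S + s *\<^sub>R v) (w s)) has_vector_derivative ptrans_to_id \<Gamma> S (w' + \<Gamma> S v (w 0)))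
    (at 0)"
proof -
  obtain \<delta>1 M where "\<delta>1 > 0" and line: "\<And>s. \<bar>s\<bar> \<le> \<delta>1 \<Longrightarrow> S + s *\<^sub>R v \<in> SPD"
    and "linear_ode_family (\<lambda>s. transport_coeff \<Gamma> (S + s *\<^sub>R v)) (transport_coeff_deriv \<Gamma> S v) \<delta>1 M"
    by (rule transport_linear_ode_family) blast
  define \<delta> where "\<delta> = min \<delta>1 (\<delta>0 / 2)"
  have \<delta>: "\<delta> > 0" "\<delta> \<le> \<delta>1" "\<delta> < \<delta>0"
    using \<open>\<delta>1 > 0\<close> \<open>\<delta>0 > 0\<close> by (auto simp: \<delta>_def)
  have family: "linear_ode_family (\<lambda>s. transport_coeff \<Gamma> (S + s *\<^sub>R v)) (transport_coeff_deriv \<Gamma> S v) \<delta> M"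
    by (rule linear_ode_family.smaller_radius) (use \<open>linear_ode_family _ _ \<delta>1 M\<close> \<delta> in auto)
  have "S + s *\<^sub>R v \<in> SPD" if "\<bar>s\<bar> \<le> \<delta>" for s
    using that \<delta> by (intro line) auto
  then obtain U where U0: "\<And>s. U s 0 = w s" and U: "\<And>s t. \<bar>s\<bar> \<le> \<delta> \<Longrightarrow> t \<in> {0..1} \<Longrightarrow>
      (U s has_vector_derivative transport_coeff \<Gamma> (S + s *\<^sub>R v) t (U s t)) (at t within {0..1})"
    by (rule transport_family_exists[OF conn, where A = "\<lambda>s. \<bar>s\<bar> \<le> \<delta>" and P = "\<lambda>s. S + s *\<^sub>R v" and W = w])
      blast+
  have w_Sym': "w s \<in> Sym" if "\<bar>s\<bar> \<le> \<delta>" for s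
    using that \<delta> by (intro w_Sym) auto
  have J0_Sym: "w' + \<Gamma> S v (w 0) \<in> Sym"
    using has_vector_derivative_Sym[OF \<open>\<delta>0 > 0\<close> w_Sym w'] conn S v w_Sym'[of 0] \<delta>
    by (auto simp: connection_def)
  obtain J where J0: "J 0 = w' + \<Gamma> S v (w 0)"
    and J: "\<And>t. t \<in> {0..1} \<Longrightarrow> (J has_vector_derivative transport_coeff \<Gamma> S t (J t)) (at t within {0..1})"
    by (rule transport_solution_exists[OF conn S, of "w' + \<Gamma> S v (w 0)"]) blast
  define D where "D t = J t - (1 - t) *\<^sub>R christoffel \<Gamma> (S + t *\<^sub>R (mat 1 - S)) v (U 0 t)" for t
  have U_0: "(U 0 has_vector_derivative transport_coeff \<Gamma> S t (U 0 t)) (at t within {0..1})" if "t \<in> {0..1}" for t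
    using U[of 0 t] that \<delta> by simp
  have dU: "((\<lambda>s. U s 1) has_vector_derivative D 1) (at 0)"
  proof (rule linear_ode_family.solution_has_vector_derivative_param[OF family U])
    show "((\<lambda>s. U s 0) has_vector_derivative w') (at 0)"
      using w' by (simp add: U0)
    show "D 0 = w'"
      using J0 w_Sym'[of 0] \<delta> S v by (simp add: D_def U0 christoffel_eq[OF conn])
    show "(D has_vector_derivative transport_coeff \<Gamma> (S + 0 *\<^sub>R v) t (D t) + transport_coeff_deriv \<Gamma> S v t (U 0 t))
        (at t within {0..1})" if "t \<in> {0..1}" for t
      unfolding D_def using transport_variation[OF cf _ U_0 J that] w_Sym'[of 0] \<delta> by (simp add: U0)
  qed auto
  have D1: "D 1 = ptrans_to_id \<Gamma> S (w' + \<Gamma> S v (w 0))"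
    using ptrans_to_id_eq[OF conn S, of J] J0 J0_Sym J by (simp add: D_def)
  have U1: "U s 1 = ptrans_to_id \<Gamma> (S + s *\<^sub>R v) (w s)" if "\<bar>s\<bar> < \<delta>" for s
    using ptrans_to_id_eq[OF conn line, of s "U s"] U[of s] U0[of s] w_Sym'[of s] that \<delta> by auto
  from dU have "((\<lambda>s. U s 1) has_vector_derivative ptrans_to_id \<Gamma> S (w' + \<Gamma> S v (w 0))) (at 0 within UNIV)"
    by (simp add: D1)
  then show ?thesis
    by (rule has_vector_derivative_transform_within[OF _ \<open>\<delta> > 0\<close>]) (auto simp: dist_real_def U1)
qed

end

section \<open>Duality of the balanced form\<close>

lemma bounded_bilinear_trace_mult: "bounded_bilinear (\<lambda>A B :: real^'n::finite^'n. trace (A ** B))"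
proof -
  have "bilinear (\<lambda>A B :: real^'n^'n. trace (A ** B))"
    unfolding bilinear_def linear_iff
    by (simp add: trace_def matrix_matrix_mult_def algebra_simps sum.distrib sum_distrib_left)
  then show ?thesis
    by (simp add: bilinear_conv_bounded_bilinear)
qed

lemma ptrans_to_id_has_vector_derivative_cov:
  assumes conn: "connection \<Gamma>" and cf: "curvature_free \<Gamma>"
    and X: "vfield X" and Y: "vfield Y" and S: "S \<in> SPD"
  shows "((\<lambda>s. ptrans_to_id \<Gamma> (S + s *\<^sub>R X S) (Y (S + s *\<^sub>R X S))) has_vector_derivative
    ptrans_to_id \<Gamma> S (cov \<Gamma> X Y S)) (at 0)"
proof -
  have v: "X S \<in> Sym"
    using X S by (simp add: vfield_def)
  obtain e where "e > 0" and line: "\<And>s. \<bar>s\<bar> < e \<Longrightarrow> S + s *\<^sub>R X S \<in> SPD"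
    using SPD_line_neighbourhood[OF S v] by blast
  have "((\<lambda>s. Y (S + s *\<^sub>R X S)) has_vector_derivative dd Y S (X S)) (at 0)"
    using Y S v by (intro smooth_SPD_line_derivative) (simp_all add: vfield_def)
  from ptrans_to_id_has_vector_derivative[OF conn S v cf \<open>e > 0\<close> _ this]
  show ?thesis
    using Y line by (simp add: cov_def vfield_def)
qed

lemma balanced_dual:
  fixes \<Gamma> \<Gamma>s :: "'n::finite mat \<Rightarrow> 'n mat \<Rightarrow> 'n mat \<Rightarrow> 'n mat"
  assumes "connection \<Gamma>" "curvature_free \<Gamma>" and "connection \<Gamma>s" "curvature_free \<Gamma>s"
  shows "dual (balanced \<Gamma> \<Gamma>s) \<Gamma> \<Gamma>s"
  unfolding dual_def
proof (intro allI impI ballI)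
  fix X Y Z :: "'n mat \<Rightarrow> 'n mat" and S :: "'n mat"
  assume fields: "vfield X \<and> vfield Y \<and> vfield Z" and S: "S \<in> SPD"
  have "((\<lambda>s. balanced \<Gamma> \<Gamma>s (S + s *\<^sub>R X S) (Y (S + s *\<^sub>R X S)) (Z (S + s *\<^sub>R X S))) has_vector_derivative
      balanced \<Gamma> \<Gamma>s S (Y S) (cov \<Gamma>s X Z S) + balanced \<Gamma> \<Gamma>s S (cov \<Gamma> X Y S) (Z S)) (at 0)"
    unfolding balanced_def
    using bounded_bilinear.has_vector_derivative[OF bounded_bilinear_trace_mult
        ptrans_to_id_has_vector_derivative_cov[OF assms(1,2) _ _ S] ptrans_to_id_has_vector_derivative_cov[OF assms(3,4) _ _ S]]
      fields by simp
  then show "dd (\<lambda>T. balanced \<Gamma> \<Gamma>s T (Y T) (Z T)) S (X S)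
      = balanced \<Gamma> \<Gamma>s S (cov \<Gamma> X Y S) (Z S) + balanced \<Gamma> \<Gamma>s S (Y S) (cov \<Gamma>s X Z S)"
    unfolding dd_def by (simp add: vector_derivative_at add.commute)
qed

theorem theorem2:
  fixes g gs :: "'n::finite mat \<Rightarrow> 'n mat \<Rightarrow> 'n mat \<Rightarrow> real"
    and \<Gamma> \<Gamma>s :: "'n mat \<Rightarrow> 'n mat \<Rightarrow> 'n mat \<Rightarrow> 'n mat"
  assumes "flat_metric g" and "flat_metric gs"
    and "levi_civita g \<Gamma>" and "levi_civita gs \<Gamma>s"
    and "\<forall>S\<in>SPD. \<forall>X\<in>Sym. \<forall>Y\<in>Sym. balanced \<Gamma> \<Gamma>s S X Y = balanced \<Gamma> \<Gamma>s S Y X"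
    and "\<forall>S\<in>SPD. \<forall>X\<in>Sym. X \<noteq> 0 \<longrightarrow> balanced \<Gamma> \<Gamma>s S X X > 0"
  shows "dually_flat (balanced \<Gamma> \<Gamma>s) \<Gamma> \<Gamma>s"
proof -
  have "flat \<Gamma>" and "flat \<Gamma>s"
    using assms(1-4) by (auto simp: flat_metric_def)
  then show ?thesis
    by (simp add: dually_flat_def flat_def balanced_dual)
qed

end
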